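(* Let $n\ge 1$, $t\ge 0$, $\ell\ge 1$ be integers with $n\ge 3t+1$. The adapted COOL protocol described in the context solves Byzantine broadcast on $\ell$-bit messages error-free: in every execution, against every adversary (of unbounded computational power, with no cryptographic assumptions) controlling at most $t$ processors (possibly including the leader), it satisfies termination, consistency and broadcast validity. Moreover it uses $O(t)$ rounds and a total of $O(\max\{n\ell,\ nt\log t\})$ communicated bits.
   Context: Setting. There are $n$ processors indexed by $[1:n]$; every two are joined by a reliable private channel, communication is synchronous (in rounds), and each recipient knows the sender of every message. At most $t$ processors are dishonest, controlled by a Byzantine adversary of unbounded computational power that knows everything and may make them deviate arbitrarily (missing values are replaced by a fixed default). One designated processor, the leader, holds an $\ell$-bit message $\boldsymbol M$. $\phi$ denotes a default value different from every $\ell$-bit message. Logarithms are base 2. Byzantine broadcast requirements: termination (every honest processor eventually outputs a message and terminates), consistency (all honest processors output the same message), validity (if the leader is honest, every honest processor outputs $\boldsymbol M$). Error-free means these hold in every execution. Adapted COOL: in a first round the leader sends an $\ell$-bit message to every processor (an honest leader sends $\boldsymbol M$); each processor $i$ takes the message received (a fixed default if none) as its initial message $\boldsymbol w_i$; then all processors run COOL, described next. Code. Let $k=\lfloor t/5\rfloor+1$ and $c=\lceil \max\{\ell,(t/5+1)\log(n+1)\}/k\rceil$ (so $n\le 2^c-1$). Messages are zero-padded to $kc$ bits and regarded as vectors in $GF(2^c)^k$. Integers in $[1:n]$ are identified with distinct nonzero elements of $GF(2^c)$, and $\boldsymbol h_i\in GF(2^c)^k$ has entries $h_{i,j}=\prod_{p\in[1:k],\,p\ne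 j}\frac{i-p}{j-p}$ computed in $GF(2^c)$. Core protocol (all $n$ processors; honest processor $i$). Initialization: $\boldsymbol w^{(i)}:=\boldsymbol w_i$, $y^{(i)}_j:=\boldsymbol h_j^{\mathsf T}\boldsymbol w_i$, $u_i(i):=1$. Phase 1. (a) Send $(y^{(i)}_j,y^{(i)}_i)$ to each $j\ne i$. (b) For $j\ne i$, $u_i(j):=1$ if the pair received from $j$ equals $(y^{(i)}_i,y^{(i)}_j)$, else $0$. Set $s_i:=1$ if $\sum_j u_i(j)\ge n-t$; otherwise $s_i:=0$ and $\boldsymbol w^{(i)}:=\phi$. (c) Send $s_i$ to all; each processor records the indicator received from each $j$ (its own for itself) and forms $\mathcal S_1=\{j:s_j=1\}$, $\mathcal S_0=\{j:s_j=0\}$. Phase 2. If $s_i=1$: set $u_i(j):=0$ for $j\in\mathcal S_0$; if now $\sum_j u_i(j)<n-t$, set $s_i:=0$, $\boldsymbol w^{(i)}:=\phi$, send $s_i=0$ to all. Everyone updates recorded indicators and $\mathcal S_0,\mathcal S_1$. Phase 3. Repeat Phase 2 once more. Vote $v_i:=1$ if recorded $\sum_j s_j\ge 2t+1$, else $0$. Run on the votes a deterministic error-free binary Byzantine agreement protocol for $t<n/3$ with $O(nt)$ bits and $O(t)$ rounds (e.g. Berman–Garay–Perry or Coan–Welch). If the decision is $0$, output $\phi$ and stop. Phase 4 (decision 1). If $s_i=0$: replace $y^{(i)}_i$ by the most frequent first component of the Phase-1 pairs received from $j\in\mathcal S_1$; send it to every $j\in\mathcal S_0\setminus\{i\}$;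 with $z_i=y^{(i)}_i$, $z_j$ the value received in Phase 4 for $j\in\mathcal S_0\setminus\{i\}$, $z_j$ the second component of the Phase-1 pair for $j\in\mathcal S_1$, set $\boldsymbol w^{(i)}$ to a message $\boldsymbol x$ with $\boldsymbol h_j^{\mathsf T}\boldsymbol x=z_j$ for at least $n-t$ indices ($\phi$ if none). If $s_i=1$, keep $\boldsymbol w^{(i)}$. Output $\boldsymbol w^{(i)}$. COOL in general: if $n\le Ct$ for a fixed constant $C$, COOL is the core protocol; otherwise the processors of $Q=[1:3t+1]$ run the core protocol among themselves (with $n$ replaced by $n'=3t+1$), then each $i\in Q$ sends $\boldsymbol h_i^{\mathsf T}\boldsymbol w^{(i)}$ of its output (a marker if $\phi$) to every processor outside $Q$, which outputs the message consistent with the values of at least $n'-t$ processors of $Q$ (or $\phi$ on at least $n'-t$ markers). *)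

theory Defs
  imports Complex_Main "HOL-Algebra.Ring" "HOL-Algebra.FiniteProduct"
begin

text \<open>A family of concrete representations of GF(2^c), one for every c \<ge> 1:
  gf G c is a field with 2^c elements, sym G c is a bijection between c-bit strings
  and the field elements (used to regard a zero-padded message as a vector in GF(2^c)^k),
  and pt G c identifies the integers 1..2^c-1 with distinct nonzero field elements.\<close>

record 'a gf_data =
  gf  :: "nat \<Rightarrow> 'a ring"
  sym :: "nat \<Rightarrow> bool list \<Rightarrow> 'a"
  pt  :: "nat \<Rightarrow> nat \<Rightarrow> 'a"

definition valid_gf :: "'a gf_data \<Rightarrow> bool" where
  "valid_gf G \<longleftrightarrow> (\<forall>c\<ge>1. field (gf G c) \<and> card (carrier (gf G c)) = 2 ^ c
     \<and> bij_betw (sym G c) {xs. length xs = c} (carrier (gf G c))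
     \<and> inj_on (pt G c) {1..2 ^ c - 1}
     \<and> pt G c ` {1..2 ^ c - 1} \<subseteq> carrier (gf G c) - {zero (gf G c)})"

definition kpar :: "nat \<Rightarrow> nat" where
  "kpar t = t div 5 + 1"

definition cpar :: "nat \<Rightarrow> nat \<Rightarrow> nat \<Rightarrow> nat" where
  "cpar m t l = nat \<lceil>max (real l) ((real t / 5 + 1) * log 2 (real m + 1)) / real (kpar t)\<rceil>"

definition hco :: "'a gf_data \<Rightarrow> nat \<Rightarrow> nat \<Rightarrow> nat \<Rightarrow> nat \<Rightarrow> 'a" where
  "hco G c k i j = finprod (gf G c)
     (\<lambda>p. mult (gf G c) (a_minus (gf G c) (pt G c i) (pt G c p))
                         (m_inv (gf G c) (a_minus (gf G c) (pt G c j) (pt G c p))))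
     ({1..k} - {j})"

definition evalc :: "'a gf_data \<Rightarrow> nat \<Rightarrow> nat \<Rightarrow> nat \<Rightarrow> (nat \<Rightarrow> 'a) \<Rightarrow> 'a" where
  "evalc G c k i x = finsum (gf G c) (\<lambda>j. mult (gf G c) (hco G c k i j) (x j)) {1..k}"

definition encm :: "'a gf_data \<Rightarrow> nat \<Rightarrow> nat \<Rightarrow> bool list \<Rightarrow> nat \<Rightarrow> 'a" where
  "encm G c k x = (\<lambda>j. sym G c (take c (drop ((j - 1) * c) (x @ replicate (k * c - length x) False))))"

definition sanit :: "'a ring \<Rightarrow> 'a \<Rightarrow> 'a" where
  "sanit R v = (if v \<in> carrier R then v else zero R)"

text \<open>All values sent by dishonest processors in an execution (the adversary may choose them
  adaptively; since honest processors are deterministic, quantifying over all such value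
  assignments covers all executions).  Malformed values are replaced by fixed defaults.
  ba_choice is the decision of the binary Byzantine agreement in the case where the honest
  votes are not unanimous (when they are unanimous, the decision is forced by the validity
  of the BA protocol; agreement of BA means there is one common decision).\<close>

record 'a adversary =
  lead_msg :: "nat \<Rightarrow> bool list"           \<comment> \<open>message a dishonest leader sends to i\<close>
  ph1_pair :: "nat \<Rightarrow> nat \<Rightarrow> 'a \<times> 'a"   \<comment> \<open>ph1_pair j i: Phase 1 pair sent by j to i\<close>
  ph1_ind  :: "nat \<Rightarrow> nat \<Rightarrow> bool"      \<comment> \<open>indicator s_j sent by j to i\<close>
  ph2_zero :: "nat \<Rightarrow> nat \<Rightarrow> bool"      \<comment> \<open>j sends s_j = 0 to i in Phase 2\<close>
  ph3_zero :: "nat \<Rightarrow> nat \<Rightarrow> bool"      \<comment> \<open>j sends s_j = 0 to i in Phase 3\<close>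
  ba_choice :: bool
  ph4_val  :: "nat \<Rightarrow> nat \<Rightarrow> 'a"        \<comment> \<open>Phase 4 value sent by j to i\<close>
  fin_val  :: "nat \<Rightarrow> nat \<Rightarrow> 'a option" \<comment> \<open>value (None = marker) sent by j in Q to i outside Q\<close>

text \<open>H is the set of honest processors, w0 i the initial message of processor i.
  Outputs: Some x for a message x, None for phi.\<close>

locale cool_core =
  fixes G :: "'a gf_data" and m t l :: nat and H :: "nat set"
    and w0 :: "nat \<Rightarrow> bool list" and A :: "'a adversary"
begin

definition "Pr = {1..m}"
definition "k = kpar t"
definition "c = cpar m t l"
definition "R = gf G c"

definition y :: "nat \<Rightarrow> nat \<Rightarrow> 'a" where
  "y i j = evalc G c k j (encm G c k (w0 i))"

definition pair1 :: "nat \<Rightarrow> nat \<Rightarrow> 'a \<times> 'a" where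
  "pair1 i j = (if j \<in> H then (y j i, y j j)
               else (sanit R (fst (ph1_pair A j i)), sanit R (snd (ph1_pair A j i))))"

definition u1 :: "nat \<Rightarrow> nat \<Rightarrow> bool" where
  "u1 i j = (j = i \<or> pair1 i j = (y i i, y i j))"

definition s1 :: "nat \<Rightarrow> bool" where
  "s1 i = (card {j \<in> Pr. u1 i j} \<ge> m - t)"

definition rec1 :: "nat \<Rightarrow> nat \<Rightarrow> bool" where
  "rec1 i j = (if j = i then s1 i else if j \<in> H then s1 j else ph1_ind A j i)"

definition u2 :: "nat \<Rightarrow> nat \<Rightarrow> bool" where
  "u2 i j = (u1 i j \<and> rec1 i j)"

definition s2 :: "nat \<Rightarrow> bool" where
  "s2 i = (s1 i \<and> card {j \<in> Pr. u2 i j} \<ge> m - t)"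

definition note2 :: "nat \<Rightarrow> nat \<Rightarrow> bool" where  \<comment> \<open>j notifies i of s_j = 0 in Phase 2\<close>
  "note2 j i = (if j \<in> H then s1 j \<and> \<not> s2 j else ph2_zero A j i)"

definition rec2 :: "nat \<Rightarrow> nat \<Rightarrow> bool" where
  "rec2 i j = (if j = i then s2 i else rec1 i j \<and> \<not> note2 j i)"

definition u3 :: "nat \<Rightarrow> nat \<Rightarrow> bool" where
  "u3 i j = (u2 i j \<and> rec2 i j)"

definition s3 :: "nat \<Rightarrow> bool" where
  "s3 i = (s2 i \<and> card {j \<in> Pr. u3 i j} \<ge> m - t)"

definition note3 :: "nat \<Rightarrow> nat \<Rightarrow> bool" where
  "note3 j i = (if j \<in> H then s2 j \<and> \<not> s3 j else ph3_zero A j i)"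

definition rec3 :: "nat \<Rightarrow> nat \<Rightarrow> bool" where
  "rec3 i j = (if j = i then s3 i else rec2 i j \<and> \<not> note3 j i)"

definition vote :: "nat \<Rightarrow> bool" where
  "vote i = (card {j \<in> Pr. rec3 i j} \<ge> 2 * t + 1)"

definition decision :: bool where
  "decision = (if \<forall>i \<in> H \<inter> Pr. vote i then True
               else if \<forall>i \<in> H \<inter> Pr. \<not> vote i then False else ba_choice A)"

definition S1 :: "nat \<Rightarrow> nat set" where "S1 i = {j \<in> Pr. rec3 i j}"
definition S0 :: "nat \<Rightarrow> nat set" where "S0 i = {j \<in> Pr. \<not> rec3 i j}"

definition maj :: "nat \<Rightarrow> 'a" where
  "maj i = (SOME v. v \<in> carrier R \<and>
      (\<forall>v'. card {j \<in> S1 i. fst (pair1 i j) = v'} \<le> card {j \<in> S1 i. fst (pair1 i j) = v}))"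

definition ph4 :: "nat \<Rightarrow> nat \<Rightarrow> 'a" where
  "ph4 i j = (if j \<in> H then (if \<not> s3 j \<and> i \<in> S0 j then maj j else zero R)
              else sanit R (ph4_val A j i))"

definition z :: "nat \<Rightarrow> nat \<Rightarrow> 'a" where
  "z i j = (if j = i then maj i else if j \<in> S0 i then ph4 i j else snd (pair1 i j))"

definition Msgs :: "bool list set" where "Msgs = {x. length x = l}"

definition consistent :: "nat \<Rightarrow> bool list \<Rightarrow> bool" where
  "consistent i x = (card {j \<in> Pr. evalc G c k j (encm G c k x) = z i j} \<ge> m - t)"

definition decode :: "nat \<Rightarrow> bool list option" where
  "decode i = (if \<exists>x \<in> Msgs. consistent i x
               then Some (SOME x. x \<in> Msgs \<and> consistent i x) else None)"

definition out :: "nat \<Rightarrow> bool list option" where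
  "out i = (if \<not> decision then None else if s3 i then Some (w0 i) else decode i)"

text \<open>Bits sent by honest processors (excluding the binary BA sub-protocol).\<close>
definition bits :: nat where
  "bits = (\<Sum>i \<in> H \<inter> Pr. 2 * c * (m - 1) + (m - 1)
          + (if s1 i \<and> \<not> s2 i then m - 1 else 0)
          + (if s2 i \<and> \<not> s3 i then m - 1 else 0)
          + (if decision \<and> \<not> s3 i then c * card (S0 i - {i}) else 0))"

text \<open>Rounds (excluding the binary BA sub-protocol): Phase 1 (2 rounds), Phase 2, Phase 3,
  and Phase 4 if the decision is 1.\<close>
definition rounds :: nat where
  "rounds = 4 + (if decision then 1 else 0)"

end

definition honest :: "nat \<Rightarrow> nat set \<Rightarrow> nat set" where
  "honest n B = {1..n} - B"

definition init_msg :: "nat \<Rightarrow> nat \<Rightarrow> bool list \<Rightarrow> nat set \<Rightarrow> 'a adversary \<Rightarrow> nat \<Rightarrow> bool list" where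
  "init_msg l L M B A i = (if L \<notin> B then M
      else if length (lead_msg A i) = l then lead_msg A i else replicate l False)"

definition small_case :: "real \<Rightarrow> nat \<Rightarrow> nat \<Rightarrow> bool" where
  "small_case C n t \<longleftrightarrow> real n \<le> C * real t"

definition core_size :: "real \<Rightarrow> nat \<Rightarrow> nat \<Rightarrow> nat" where
  "core_size C n t = (if small_case C n t then n else 3 * t + 1)"

definition cool_out :: "'a gf_data \<Rightarrow> real \<Rightarrow> nat \<Rightarrow> nat \<Rightarrow> nat \<Rightarrow> nat \<Rightarrow> bool list
    \<Rightarrow> nat set \<Rightarrow> 'a adversary \<Rightarrow> nat \<Rightarrow> bool list option" where
  "cool_out G C n t l L M B A i =
     (let m = core_size C n t; w = init_msg l L M B A;
          n' = 3 * t + 1; c' = cpar n' t l; k = kpar t;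
          r = (\<lambda>p. if p \<in> honest n B
                    then map_option (\<lambda>x. evalc G c' k p (encm G c' k x))
                           (cool_core.out G m t l (honest n B) w A p)
                    else map_option (sanit (gf G c')) (fin_val A p i));
          ok = (\<lambda>x. card {p \<in> {1..n'}. r p = Some (evalc G c' k p (encm G c' k x))} \<ge> n' - t)
      in if i \<le> m then cool_core.out G m t l (honest n B) w A i
         else if \<exists>x. length x = l \<and> ok x then Some (SOME x. length x = l \<and> ok x) else None)"

definition cool_rounds :: "(nat \<Rightarrow> nat \<Rightarrow> nat) \<Rightarrow> 'a gf_data \<Rightarrow> real \<Rightarrow> nat \<Rightarrow> nat \<Rightarrow> nat
    \<Rightarrow> nat \<Rightarrow> bool list \<Rightarrow> nat set \<Rightarrow> 'a adversary \<Rightarrow> nat" where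
  "cool_rounds ba_rounds G C n t l L M B A =
     (let m = core_size C n t in
      1 + cool_core.rounds G m t l (honest n B) (init_msg l L M B A) A + ba_rounds m t
        + (if small_case C n t then 0 else 1))"

definition cool_bits :: "(nat \<Rightarrow> nat \<Rightarrow> nat) \<Rightarrow> 'a gf_data \<Rightarrow> real \<Rightarrow> nat \<Rightarrow> nat \<Rightarrow> nat
    \<Rightarrow> nat \<Rightarrow> bool list \<Rightarrow> nat set \<Rightarrow> 'a adversary \<Rightarrow> nat" where
  "cool_bits ba_bits G C n t l L M B A =
     (let m = core_size C n t in
      (if L \<notin> B then l * (n - 1) else 0)
      + cool_core.bits G m t l (honest n B) (init_msg l L M B A) A + ba_bits m t
      + (if small_case C n t then 0
         else card (honest n B \<inter> {1..m}) * (cpar m t l + 1) * (n - m)))"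

end

theory Submission
  imports Defs "HOL-Algebra.Multiplicative_Group"
begin

(* The code of dimension k = floor(t/5) + 1 is a Reed-Solomon code, so the codewords of two
   different messages agree on fewer than k coordinates.  An honest processor i with s_i = 1
   after Phase 1 agrees with all but t of the honest processors, and pairwise overlaps of these
   agreement sets are below t/5; counting inside the honest processors rules out three different
   honest messages with s = 1, and with only two candidates an honest survivor of Phase 3 forces
   all but t honest processors to hold its message, so all honest survivors of Phase 3 hold the
   same message.  If the agreement decides 1, at least t + 1 honest processors survive Phase 3;
   every honest processor then recovers its own code symbol by majority, and the n - t correct
   symbols determine the message.  An honest leader lets every honest processor pass every phase.
   For the cost, every processor sends O(n) symbols of c = O(l/t + log n) bits, where n is
   replaced by 3t + 1 (and one more round of symbols) when n > C t. *)

section \<open>Polynomial functions of bounded degree\<close>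

(* poly_fun R k f: on the carrier of R, f is a polynomial function of degree < k, in Horner form. *)
fun poly_fun :: "('a, 'b) ring_scheme \<Rightarrow> nat \<Rightarrow> ('a \<Rightarrow> 'a) \<Rightarrow> bool" where
  "poly_fun R 0 f \<longleftrightarrow> (\<forall>x\<in>carrier R. f x = \<zero>\<^bsub>R\<^esub>)"
| "poly_fun R (Suc k) f \<longleftrightarrow> (\<exists>g b. poly_fun R k g \<and> b \<in> carrier R \<and>
      (\<forall>x\<in>carrier R. f x = x \<otimes>\<^bsub>R\<^esub> g x \<oplus>\<^bsub>R\<^esub> b))"

context cring
begin

lemma poly_fun_closed: "poly_fun R k f \<Longrightarrow> x \<in> carrier R \<Longrightarrow> f x \<in> carrier R"
  by (induction k arbitrary: f) auto

lemma poly_fun_cong: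
  "poly_fun R k f \<Longrightarrow> (\<And>x. x \<in> carrier R \<Longrightarrow> f' x = f x) \<Longrightarrow> poly_fun R k f'"
  by (cases k) auto

lemma poly_fun_zero: "poly_fun R k (\<lambda>x. \<zero>)"
  by (induction k) (auto intro!: exI[of _ "\<lambda>x. \<zero>"] exI[of _ \<zero>])

lemma poly_fun_const: "b \<in> carrier R \<Longrightarrow> poly_fun R (Suc k) (\<lambda>x. b)"
  using poly_fun_zero[of k] by (auto intro!: exI[of _ "\<lambda>x. \<zero>"] exI[of _ b])

lemma poly_fun_add:
  "poly_fun R k f \<Longrightarrow> poly_fun R k g \<Longrightarrow> poly_fun R k (\<lambda>x. f x \<oplus> g x)"
proof (induction k arbitrary: f g)
  case (Suc k)
  obtain f' a where f: "poly_fun R k f'" "a \<in> carrier R" "\<forall>x\<in>carrier R. f x = x \<otimes> f' x \<oplus> a"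
    using Suc.prems(1) by auto
  obtain g' b where g: "poly_fun R k g'" "b \<in> carrier R" "\<forall>x\<in>carrier R. g x = x \<otimes> g' x \<oplus> b"
    using Suc.prems(2) by auto
  have "f x \<oplus> g x = x \<otimes> (f' x \<oplus> g' x) \<oplus> (a \<oplus> b)" if "x \<in> carrier R" for x
    using f g that poly_fun_closed[OF f(1) that] poly_fun_closed[OF g(1) that] by simp algebra
  then show ?case using Suc.IH[OF f(1) g(1)] f g by (auto intro!: exI[of _ "\<lambda>x. f' x \<oplus> g' x"])
qed simp

lemma poly_fun_smult:
  "a \<in> carrier R \<Longrightarrow> poly_fun R k f \<Longrightarrow> poly_fun R k (\<lambda>x. a \<otimes> f x)"
proof (induction k arbitrary: f)
  case (Suc k)
  obtain f' b where f: "poly_fun R k f'" "b \<in> carrier R" "\<forall>x\<in>carrier R. f x = x \<otimes> f' x \<oplus> b"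
    using Suc.prems(2) by auto
  have "a \<otimes> f x = x \<otimes> (a \<otimes> f' x) \<oplus> a \<otimes> b" if "x \<in> carrier R" for x
    using f Suc.prems(1) that poly_fun_closed[OF f(1) that] by simp algebra
  then show ?case using Suc f by (auto intro!: exI[of _ "\<lambda>x. a \<otimes> f' x"])
qed simp

lemma poly_fun_diff:
  "poly_fun R k f \<Longrightarrow> poly_fun R k g \<Longrightarrow> poly_fun R k (\<lambda>x. f x \<ominus> g x)"
  using poly_fun_add[OF _ poly_fun_smult[of "\<ominus> \<one>"], of k f g]
  by (rule poly_fun_cong) (auto simp: poly_fun_closed a_minus_def l_minus)

lemma poly_fun_mult_linear:
  "r \<in> carrier R \<Longrightarrow> poly_fun R k g \<Longrightarrow> poly_fun R (Suc k) (\<lambda>x. (x \<ominus> r) \<otimes> g x)"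
proof (induction k arbitrary: g)
  case 0
  then show ?case by (auto intro!: exI[of _ "\<lambda>x. \<zero>"] exI[of _ \<zero>])
next
  case (Suc k)
  obtain g' b where g: "poly_fun R k g'" "b \<in> carrier R" "\<forall>x\<in>carrier R. g x = x \<otimes> g' x \<oplus> b"
    using Suc.prems(2) by auto
  have "poly_fun R (Suc k) (\<lambda>x. (x \<ominus> r) \<otimes> g' x \<oplus> b)"
    using Suc.IH[OF Suc.prems(1) g(1)] poly_fun_const[OF g(2)] by (rule poly_fun_add)
  moreover have "(x \<ominus> r) \<otimes> g x = x \<otimes> ((x \<ominus> r) \<otimes> g' x \<oplus> b) \<oplus> \<ominus> (r \<otimes> b)" if "x \<in> carrier R" for x
    using g Suc.prems(1) that poly_fun_closed[OF g(1) that] by simp algebra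
  ultimately show ?case using g Suc.prems(1) by (subst poly_fun.simps(2)) blast
qed

lemma poly_fun_factor_root:
  assumes "poly_fun R (Suc k) f" "r \<in> carrier R" "f r = \<zero>"
  shows "\<exists>g. poly_fun R k g \<and> (\<forall>x\<in>carrier R. f x = (x \<ominus> r) \<otimes> g x)"
  using assms
proof (induction k arbitrary: f)
  case 0
  then have "\<forall>x\<in>carrier R. f x = \<zero>" by auto
  then show ?case using 0(2) by (auto intro!: exI[of _ "\<lambda>x. \<zero>"])
next
  case (Suc k)
  obtain g b where g: "poly_fun R (Suc k) g" "b \<in> carrier R" "\<forall>x\<in>carrier R. f x = x \<otimes> g x \<oplus> b"
    using Suc.prems(1) by (meson poly_fun.simps(2))
  have gr: "g r \<in> carrier R" using g(1) Suc.prems(2) by (rule poly_fun_closed)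
  have diff: "poly_fun R (Suc k) (\<lambda>x. g x \<ominus> g r)"
    using g(1) poly_fun_const[OF gr] by (rule poly_fun_diff)
  have "g r \<ominus> g r = \<zero>" using gr by simp
  then obtain h where h: "poly_fun R k h" "\<forall>x\<in>carrier R. g x \<ominus> g r = (x \<ominus> r) \<otimes> h x"
    using Suc.IH[OF diff Suc.prems(2)] by blast
  have b: "b = \<ominus> (r \<otimes> g r)"
    using Suc.prems(2,3) g gr by (metis m_closed minus_equality add.m_comm)
  have "f x = (x \<ominus> r) \<otimes> (x \<otimes> h x \<oplus> g r)" if x: "x \<in> carrier R" for x
  proof -
    have "g x = (x \<ominus> r) \<otimes> h x \<oplus> g r"
      using h(2) x poly_fun_closed[OF g(1) x] gr by (metis r_right_minus_eq a_minus_def add.m_assoc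
          add.m_closed add.l_inv_ex r_zero add.inv_closed l_neg)
    then show ?thesis
      using g(3) x b poly_fun_closed[OF h(1) x] gr Suc.prems(2) by simp algebra
  qed
  moreover have "poly_fun R (Suc k) (\<lambda>x. x \<otimes> h x \<oplus> g r)" using h gr by auto
  ultimately show ?case by blast
qed

lemma poly_fun_finprod_linear:
  assumes "finite P" "\<And>p. p \<in> P \<Longrightarrow> a p \<in> carrier R" "\<And>p. p \<in> P \<Longrightarrow> b p \<in> carrier R"
  shows "poly_fun R (Suc (card P)) (\<lambda>x. \<Otimes>p\<in>P. (x \<ominus> a p) \<otimes> b p)"
  using assms
proof (induction P rule: finite_induct)
  case empty
  then show ?case using poly_fun_const[of \<one> 0] by simp
next
  case (insert p P)
  have "poly_fun R (Suc (Suc (card P))) (\<lambda>x. (x \<ominus> a p) \<otimes> (b p \<otimes> (\<Otimes>q\<in>P. (x \<ominus> a q) \<otimes> b q)))"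
    using insert by (intro poly_fun_mult_linear poly_fun_smult) auto
  moreover have "(\<Otimes>q\<in>insert p P. (x \<ominus> a q) \<otimes> b q) = (x \<ominus> a p) \<otimes> (b p \<otimes> (\<Otimes>q\<in>P. (x \<ominus> a q) \<otimes> b q))"
    if "x \<in> carrier R" for x
  proof -
    have "(\<Otimes>q\<in>insert p P. (x \<ominus> a q) \<otimes> b q) = ((x \<ominus> a p) \<otimes> b p) \<otimes> (\<Otimes>q\<in>P. (x \<ominus> a q) \<otimes> b q)"
      using insert that by (intro finprod_insert) auto
    also have "\<dots> = (x \<ominus> a p) \<otimes> (b p \<otimes> (\<Otimes>q\<in>P. (x \<ominus> a q) \<otimes> b q))"
      using insert that by (intro m_assoc) auto
    finally show ?thesis .
  qed
  ultimately show ?case using insert by (auto intro: poly_fun_cong)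
qed

lemma poly_fun_finsum:
  "finite J \<Longrightarrow> (\<And>j. j \<in> J \<Longrightarrow> poly_fun R k (F j)) \<Longrightarrow> poly_fun R k (\<lambda>x. \<Oplus>j\<in>J. F j x)"
proof (induction J rule: finite_induct)
  case empty
  then show ?case using poly_fun_zero by simp
next
  case (insert j J)
  have "poly_fun R k (\<lambda>x. F j x \<oplus> (\<Oplus>i\<in>J. F i x))" using insert by (intro poly_fun_add) auto
  moreover have "(\<Oplus>i\<in>insert j J. F i x) = F j x \<oplus> (\<Oplus>i\<in>J. F i x)" if "x \<in> carrier R" for x
    using insert that poly_fun_closed by (intro finsum_insert) auto
  ultimately show ?case by (auto intro: poly_fun_cong)
qed

end

lemma (in domain) poly_fun_eq_zero_if_roots:
  assumes "poly_fun R k f" "finite S" "S \<subseteq> carrier R" "k \<le> card S" "\<forall>s\<in>S. f s = \<zero>"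
    and "x \<in> carrier R"
  shows "f x = \<zero>"
  using assms
proof (induction k arbitrary: f S)
  case (Suc k)
  then obtain r where r: "r \<in> S" by fastforce
  then have rc: "r \<in> carrier R" using Suc.prems(3) by auto
  obtain g where g: "poly_fun R k g" "\<forall>x\<in>carrier R. f x = (x \<ominus> r) \<otimes> g x"
    using poly_fun_factor_root[OF Suc.prems(1) rc] Suc.prems(5) r by auto
  have "g s = \<zero>" if s: "s \<in> S - {r}" for s
  proof -
    have sc: "s \<in> carrier R" using s Suc.prems(3) by auto
    have "(s \<ominus> r) \<otimes> g s = \<zero>" using g(2) sc Suc.prems(5) s by auto
    then show ?thesis using s sc rc poly_fun_closed[OF g(1) sc] by (simp add: integral_iff)
  qed
  moreover have "k \<le> card (S - {r})" using Suc.prems(2,4) r by simp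
  ultimately have "g x = \<zero>" using Suc.IH[OF g(1), of "S - {r}"] Suc.prems(2,3,6) by blast
  then show ?case using g(2) Suc.prems(6) rc by simp
qed simp

section \<open>Lagrange interpolation and the Reed-Solomon code\<close>

definition lagrange_basis :: "('a, 'b) ring_scheme \<Rightarrow> (nat \<Rightarrow> 'a) \<Rightarrow> nat \<Rightarrow> nat \<Rightarrow> 'a \<Rightarrow> 'a" where
  "lagrange_basis R a k j x = (\<Otimes>\<^bsub>R\<^esub>q\<in>{1..k} - {j}. (x \<ominus>\<^bsub>R\<^esub> a q) \<otimes>\<^bsub>R\<^esub> inv\<^bsub>R\<^esub> (a j \<ominus>\<^bsub>R\<^esub> a q))"

locale lagrange_nodes = field +
  fixes a :: "nat \<Rightarrow> 'a" and k :: nat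
  assumes nodes_inj: "inj_on a {1..k}" and nodes_closed: "a ` {1..k} \<subseteq> carrier R"
begin

abbreviation L where "L \<equiv> lagrange_basis R a k"

lemma node_diff_Units:
  assumes "i \<in> {1..k}" "j \<in> {1..k}" "i \<noteq> j"
  shows "a i \<ominus> a j \<in> Units R"
proof -
  have "a i \<noteq> a j" using nodes_inj assms by (auto dest: inj_onD)
  moreover have "a i \<in> carrier R" "a j \<in> carrier R" using assms nodes_closed by auto
  ultimately show ?thesis using field_Units by auto
qed

lemma lagrange_factor_closed:
  assumes "j \<in> {1..k}" "q \<in> {1..k}" "q \<noteq> j" "y \<in> carrier R"
  shows "(y \<ominus> a q) \<otimes> inv (a j \<ominus> a q) \<in> carrier R"
proof -
  have "a q \<in> carrier R" using assms(2) nodes_closed by auto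
  then show ?thesis using assms node_diff_Units[of j q] by simp
qed

lemma lagrange_basis_poly_fun:
  assumes "j \<in> {1..k}"
  shows "poly_fun R k (L j)"
proof -
  have "poly_fun R (Suc (card ({1..k} - {j}))) (L j)"
    unfolding lagrange_basis_def using assms nodes_closed node_diff_Units
    by (intro poly_fun_finprod_linear) auto
  moreover have "Suc (card ({1..k} - {j})) = k" using assms by auto
  ultimately show ?thesis by metis
qed

lemma lagrange_basis_closed: "j \<in> {1..k} \<Longrightarrow> x \<in> carrier R \<Longrightarrow> L j x \<in> carrier R"
  using lagrange_basis_poly_fun poly_fun_closed by blast

lemma lagrange_basis_node:
  assumes i: "i \<in> {1..k}" and j: "j \<in> {1..k}"
  shows "L i (a j) = (if j = i then \<one> else \<zero>)"
proof (cases "j = i")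
  case True
  have "(\<Otimes>q\<in>{1..k} - {i}. (a i \<ominus> a q) \<otimes> inv (a i \<ominus> a q)) = \<one>"
    using i node_diff_Units by (intro finprod_one_eqI) auto
  then show ?thesis unfolding lagrange_basis_def using True by simp
next
  case False
  have "{1..k} - {i} = insert j ({1..k} - {i} - {j})" using False j by auto
  then have "L i (a j) = ((a j \<ominus> a j) \<otimes> inv (a i \<ominus> a j)) \<otimes>
      (\<Otimes>q\<in>{1..k} - {i} - {j}. (a j \<ominus> a q) \<otimes> inv (a i \<ominus> a q))"
    unfolding lagrange_basis_def using False i j nodes_closed
    by (subst finprod_insert[symmetric]) (auto simp: Pi_def intro!: lagrange_factor_closed)
  also have "\<dots> = \<zero>"
  proof -
    have "a j \<in> carrier R" "inv (a i \<ominus> a j) \<in> carrier R"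
      using i j False nodes_closed node_diff_Units by auto
    moreover have "(\<Otimes>q\<in>{1..k} - {i} - {j}. (a j \<ominus> a q) \<otimes> inv (a i \<ominus> a q)) \<in> carrier R"
      using i j nodes_closed by (intro finprod_closed) (auto intro!: lagrange_factor_closed)
    ultimately show ?thesis by (simp add: a_minus_def r_neg)
  qed
  finally show ?thesis using False by simp
qed

lemma lagrange_interpolant_poly_fun:
  assumes "\<And>j. j \<in> {1..k} \<Longrightarrow> x j \<in> carrier R"
  shows "poly_fun R k (\<lambda>y. \<Oplus>j\<in>{1..k}. L j y \<otimes> x j)"
proof (intro poly_fun_finsum)
  fix j assume j: "j \<in> {1..k}"
  show "poly_fun R k (\<lambda>y. L j y \<otimes> x j)"
    using poly_fun_smult[OF assms[OF j] lagrange_basis_poly_fun[OF j]]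
    by (rule poly_fun_cong) (use lagrange_basis_closed j assms in \<open>simp add: m_comm\<close>)
qed simp

lemma lagrange_interpolant_node:
  assumes "\<And>j. j \<in> {1..k} \<Longrightarrow> x j \<in> carrier R" and i: "i \<in> {1..k}"
  shows "(\<Oplus>j\<in>{1..k}. L j (a i) \<otimes> x j) = x i"
proof -
  have "(\<Oplus>j\<in>{1..k}. L j (a i) \<otimes> x j) = (\<Oplus>j\<in>{1..k}. if i = j then x j else \<zero>)"
    using lagrange_basis_node i assms by (intro finsum_cong') auto
  also have "\<dots> = x i" using i assms by (intro finsum_singleton) auto
  finally show ?thesis .
qed

text \<open>The difference of the two interpolants has degree < k and vanishes on the k points
  a ` P, hence everywhere; at the node a i it equals x i \<ominus> x' i.\<close>

lemma lagrange_coeffs_unique: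
  assumes x: "\<And>j. j \<in> {1..k} \<Longrightarrow> x j \<in> carrier R"
    and x': "\<And>j. j \<in> {1..k} \<Longrightarrow> x' j \<in> carrier R"
    and P: "inj_on a P" "a ` P \<subseteq> carrier R" "k \<le> card P"
    and agree: "\<And>p. p \<in> P \<Longrightarrow>
      (\<Oplus>j\<in>{1..k}. L j (a p) \<otimes> x j) = (\<Oplus>j\<in>{1..k}. L j (a p) \<otimes> x' j)"
    and i: "i \<in> {1..k}"
  shows "x i = x' i"
proof -
  define D where "D y = (\<Oplus>j\<in>{1..k}. L j y \<otimes> x j) \<ominus> (\<Oplus>j\<in>{1..k}. L j y \<otimes> x' j)" for y
  have "finite P" using P(3) i card.infinite by fastforce
  have "D y = \<zero>" if "y \<in> carrier R" for y
  proof (rule poly_fun_eq_zero_if_roots[of k D "a ` P"])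
    show "poly_fun R k D"
      unfolding D_def by (intro poly_fun_diff lagrange_interpolant_poly_fun x x')
    show "k \<le> card (a ` P)" using P by (simp add: card_image)
    show "\<forall>s\<in>a ` P. D s = \<zero>"
      using agree P(2) lagrange_basis_closed x' unfolding D_def by (auto intro!: finsum_closed)
  qed (use \<open>finite P\<close> P(2) that in auto)
  then have "D (a i) = \<zero>" using i nodes_closed by blast
  then show ?thesis unfolding D_def using lagrange_interpolant_node x x' i by simp
qed

end

lemma cpar_bounds:
  assumes l: "1 \<le> l"
  shows "1 \<le> cpar m t l" "l \<le> kpar t * cpar m t l" "m + 1 \<le> 2 ^ cpar m t l"
proof -
  define X where "X = max (real l) ((real t / 5 + 1) * log 2 (real m + 1))"
  define k where "k = kpar t"
  have kpos: "real k > 0" unfolding k_def kpar_def by simp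
  have kle: "real k \<le> real t / 5 + 1"
  proof -
    have "real (t div 5) \<le> real t / 5" by linarith
    then show ?thesis unfolding k_def kpar_def by simp
  qed
  have Xl: "X \<ge> real l" unfolding X_def by simp
  have Xpos: "X > 0" using Xl l by simp
  have c_eq: "cpar m t l = nat \<lceil>X / real k\<rceil>" unfolding cpar_def X_def k_def by simp
  have ceil_pos: "\<lceil>X / real k\<rceil> \<ge> 1" using Xpos kpos by (simp add: one_le_ceiling)
  have rc: "real (cpar m t l) = of_int \<lceil>X / real k\<rceil>" using c_eq ceil_pos by simp
  have cge: "real (cpar m t l) \<ge> X / real k" using rc by simp
  then have kc: "real k * real (cpar m t l) \<ge> X" using kpos by (simp add: field_simps)
  show "1 \<le> cpar m t l" using c_eq nat_mono[OF ceil_pos] by simp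
  have "real l \<le> real (k * cpar m t l)" using kc Xl by simp
  then show "l \<le> kpar t * cpar m t l" unfolding k_def by linarith
  have "(real t / 5 + 1) * log 2 (real m + 1) \<le> X" unfolding X_def by simp
  also have "\<dots> \<le> real k * real (cpar m t l)" by (rule kc)
  also have "\<dots> \<le> (real t / 5 + 1) * real (cpar m t l)" using kle by (intro mult_right_mono) auto
  finally have A: "(real t / 5 + 1) * log 2 (real m + 1) \<le> (real t / 5 + 1) * real (cpar m t l)" .
  have pos: "real t / 5 + 1 > 0" by (simp add: add_pos_nonneg)
  from A have "log 2 (real m + 1) \<le> real (cpar m t l)"
    using mult_le_cancel_left_pos[OF pos] by blast
  then have B: "real m + 1 \<le> 2 powr real (cpar m t l)"
    using log_le_iff[of 2 "real m + 1"] by simp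
  have "2 powr real (cpar m t l) = real (2 ^ cpar m t l)" by (simp add: powr_realpow)
  then show "m + 1 \<le> 2 ^ cpar m t l" using B by linarith
qed

lemma list_eq_if_chunks_eq:
  assumes "length xs = k * c" "length ys = k * c"
    and "\<And>j. j \<in> {1..k} \<Longrightarrow> take c (drop ((j - 1) * c) xs) = take c (drop ((j - 1) * c) ys)"
  shows "xs = ys"
proof (rule nth_equalityI)
  show "length xs = length ys" using assms by simp
  fix n assume n: "n < length xs"
  then have cpos: "c > 0" using assms by (cases c) auto
  define j where "j = n div c + 1"
  have "n div c < k" using n assms less_mult_imp_div_less[of n k c] by simp
  then have j: "j \<in> {1..k}" unfolding j_def by simp
  have jn: "(j - 1) * c + n mod c = n" unfolding j_def by simp
  have mc: "n mod c < c" using cpos by simp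
  have le: "(j - 1) * c \<le> length xs" "(j - 1) * c \<le> length ys" using jn n assms by linarith+
  have "xs ! n = xs ! ((j - 1) * c + n mod c)" using jn by simp
  also have "\<dots> = drop ((j - 1) * c) xs ! (n mod c)" using le by (simp add: nth_drop)
  also have "\<dots> = take c (drop ((j - 1) * c) xs) ! (n mod c)" using mc by (simp add: nth_take)
  also have "\<dots> = take c (drop ((j - 1) * c) ys) ! (n mod c)" using assms(3)[OF j] by simp
  also have "\<dots> = drop ((j - 1) * c) ys ! (n mod c)" using mc by (simp add: nth_take)
  also have "\<dots> = ys ! ((j - 1) * c + n mod c)" using le by (simp add: nth_drop)
  also have "\<dots> = ys ! n" using jn by simp
  finally show "xs ! n = ys ! n" .
qed

lemma length_chunk:
  assumes "j \<in> {1..k}" "length ys = k * c"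
  shows "length (take c (drop ((j - 1) * c) ys)) = c"
proof -
  have "j * c \<le> k * c" using assms by simp
  moreover have "(j - 1) * c + c = j * c" using assms by (cases j) auto
  ultimately have "c \<le> length ys - (j - 1) * c" using assms by linarith
  then show ?thesis by simp
qed

lemma valid_gfD:
  assumes "valid_gf G" "1 \<le> c"
  shows "field (gf G c)" "bij_betw (sym G c) {xs. length xs = c} (carrier (gf G c))"
    "inj_on (pt G c) {1..2 ^ c - 1}" "pt G c ` {1..2 ^ c - 1} \<subseteq> carrier (gf G c)"
  using assms unfolding valid_gf_def by auto

lemma encm_closed:
  assumes "valid_gf G" "1 \<le> c" "length x \<le> k * c" "j \<in> {1..k}"
  shows "encm G c k x j \<in> carrier (gf G c)"
proof -
  have "length (take c (drop ((j - 1) * c) (x @ replicate (k * c - length x) False))) = c"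
    using assms(3,4) by (intro length_chunk) auto
  then show ?thesis
    unfolding encm_def using bij_betw_apply[OF valid_gfD(2)[OF assms(1,2)]] by simp
qed

lemma encm_inj:
  assumes "valid_gf G" "1 \<le> c" "length x = l" "length x' = l" "l \<le> k * c"
    and "\<And>j. j \<in> {1..k} \<Longrightarrow> encm G c k x j = encm G c k x' j"
  shows "x = x'"
proof -
  define pad where "pad ys = ys @ replicate (k * c - l) False" for ys :: "bool list"
  have len: "length (pad x) = k * c" "length (pad x') = k * c" unfolding pad_def using assms by auto
  have "inj_on (sym G c) {xs. length xs = c}" using valid_gfD(2)[OF assms(1,2)] bij_betw_def by blast
  have "pad x = pad x'"
  proof (rule list_eq_if_chunks_eq[OF len])
    fix j assume j: "j \<in> {1..k}"
    have "sym G c (take c (drop ((j - 1) * c) (pad x))) = sym G c (take c (drop ((j - 1) * c) (pad x')))"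
      using assms(6)[OF j] assms(3,4) unfolding encm_def pad_def by simp
    then show "take c (drop ((j - 1) * c) (pad x)) = take c (drop ((j - 1) * c) (pad x'))"
      using \<open>inj_on (sym G c) {xs. length xs = c}\<close> length_chunk[OF j len(1)] length_chunk[OF j len(2)]
      by (auto dest: inj_onD)
  qed
  then show ?thesis unfolding pad_def using assms(3,4) by simp
qed

lemma lagrange_nodes_gf:
  assumes "valid_gf G" "1 \<le> c" "k \<le> 2 ^ c - 1"
  shows "lagrange_nodes (gf G c) (pt G c) k"
proof -
  interpret field "gf G c" using valid_gfD(1)[OF assms(1,2)] .
  show ?thesis
    using valid_gfD(3,4)[OF assms(1,2)] assms(3)
    by unfold_locales (auto intro: inj_on_subset)
qed

lemma evalc_eq_lagrange:
  "evalc G c k i x = (\<Oplus>\<^bsub>gf G c\<^esub>j\<in>{1..k}.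
     lagrange_basis (gf G c) (pt G c) k j (pt G c i) \<otimes>\<^bsub>gf G c\<^esub> x j)"
  unfolding evalc_def hco_def lagrange_basis_def ..

lemma evalc_closed:
  assumes "valid_gf G" "1 \<le> c" "k \<le> 2 ^ c - 1" "i \<in> {1..2 ^ c - 1}"
    and "\<And>j. j \<in> {1..k} \<Longrightarrow> x j \<in> carrier (gf G c)"
  shows "evalc G c k i x \<in> carrier (gf G c)"
proof -
  interpret lagrange_nodes "gf G c" "pt G c" k using lagrange_nodes_gf[OF assms(1-3)] .
  have "pt G c i \<in> carrier (gf G c)" using valid_gfD(4)[OF assms(1,2)] assms(4) by auto
  then show ?thesis
    unfolding evalc_eq_lagrange using assms(5) lagrange_basis_closed by (intro finsum_closed) auto
qed

lemma messages_eq_if_codewords_agree: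
  assumes G: "valid_gf G" and l: "1 \<le> l" and len: "length x1 = l" "length x2 = l"
    and P: "P \<subseteq> {1..m}" "kpar t \<le> card P"
    and agree: "\<And>p. p \<in> P \<Longrightarrow> evalc G (cpar m t l) (kpar t) p (encm G (cpar m t l) (kpar t) x1)
                             = evalc G (cpar m t l) (kpar t) p (encm G (cpar m t l) (kpar t) x2)"
  shows "x1 = x2"
proof -
  define c where "c = cpar m t l"
  define k where "k = kpar t"
  have c1: "1 \<le> c" and lkc: "l \<le> k * c" and mc: "m + 1 \<le> 2 ^ c"
    using cpar_bounds[OF l, where m = m and t = t] unfolding c_def k_def by auto
  have PN: "P \<subseteq> {1..2 ^ c - 1}"
  proof
    fix p assume "p \<in> P"
    then have "1 \<le> p" "p \<le> m" using P(1) by auto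
    then show "p \<in> {1..2 ^ c - 1}" using mc by simp
  qed
  have "card P \<le> m" using P(1) card_mono[of "{1..m}" P] by simp
  then interpret lagrange_nodes "gf G c" "pt G c" k
    using lagrange_nodes_gf[OF G c1] P(2) mc unfolding k_def by simp
  have enc: "\<And>x j. length x = l \<Longrightarrow> j \<in> {1..k} \<Longrightarrow> encm G c k x j \<in> carrier (gf G c)"
    using encm_closed[OF G c1] lkc by simp
  show ?thesis
  proof (rule encm_inj[OF G c1 len lkc])
    fix j assume j: "j \<in> {1..k}"
    show "encm G c k x1 j = encm G c k x2 j"
    proof (rule lagrange_coeffs_unique[OF _ _ _ _ _ _ j])
      show "inj_on (pt G c) P" using valid_gfD(3)[OF G c1] PN by (rule inj_on_subset)
      show "pt G c ` P \<subseteq> carrier (gf G c)" using valid_gfD(4)[OF G c1] PN by blast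
      show "k \<le> card P" using P(2) unfolding k_def .
    qed (use enc len agree in \<open>simp_all add: evalc_eq_lagrange c_def k_def\<close>)
  qed
qed

section \<open>Correctness of the core protocol\<close>

lemma card_sum3_le_Un_Int:
  assumes "finite X" "finite Y" "finite Z"
  shows "card X + card Y + card Z \<le> card (X \<union> Y \<union> Z) + card (X \<inter> Y) + card (X \<inter> Z) + card (Y \<inter> Z)"
proof -
  have 1: "card (X \<union> Y) + card (X \<inter> Y) = card X + card Y" using assms card_Un_Int by metis
  have 2: "card (X \<union> Y \<union> Z) + card ((X \<union> Y) \<inter> Z) = card (X \<union> Y) + card Z" using assms card_Un_Int
    by (metis finite_UnI)
  have "(X \<union> Y) \<inter> Z = (X \<inter> Z) \<union> (Y \<inter> Z)" by auto
  then have "card ((X \<union> Y) \<inter> Z) \<le> card (X \<inter> Z) + card (Y \<inter> Z)" by (metis card_Un_le)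
  then show ?thesis using 1 2 by linarith
qed

lemma some_max_count_eq:
  fixes cnt :: "'a \<Rightarrow> nat"
  assumes "t < cnt v" "\<And>u. u \<noteq> v \<Longrightarrow> cnt u \<le> t" "v \<in> A"
  shows "(SOME u. u \<in> A \<and> (\<forall>u'. cnt u' \<le> cnt u)) = v"
proof (rule some_equality)
  have "cnt u \<le> cnt v" for u using assms(1) assms(2)[of u] by (cases "u = v") auto
  then show "v \<in> A \<and> (\<forall>u'. cnt u' \<le> cnt v)" using assms(3) by blast
  fix u assume "u \<in> A \<and> (\<forall>u'. cnt u' \<le> cnt u)"
  then have "cnt v \<le> cnt u" by blast
  then show "u = v" using assms(1) assms(2)[of u] by linarith
qed

locale cool_setting = cool_core +
  assumes gf_valid: "valid_gf G" and m_ge: "3 * t + 1 \<le> m"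
    and dishonest_le: "card ({1..m} - H) \<le> t"
    and l_pos: "1 \<le> l" and w0_length: "\<And>i. i \<in> H \<Longrightarrow> length (w0 i) = l"
begin

(* Hon and Dis are the honest and dishonest processors of the core; agrees i p says that the
   codeword of w0 i has at coordinate p the symbol y p p that p computes from its own message. *)
definition "Hon = H \<inter> Pr"
definition "Dis = Pr - H"
definition "agrees i p \<longleftrightarrow> y i p = y p p"
definition "Agree i = {p \<in> Hon. agrees i p}"

lemma finite_Pr: "finite Pr" and card_Pr: "card Pr = m"
  unfolding Pr_def by auto

lemma finite_Hon: "finite Hon" and finite_Dis: "finite Dis"
  unfolding Hon_def Dis_def using finite_Pr by auto

lemma Hon_honest: "j \<in> Hon \<Longrightarrow> j \<in> H" and Hon_Pr: "j \<in> Hon \<Longrightarrow> j \<in> Pr"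
  unfolding Hon_def by auto

lemma card_Hon_Dis: "card Hon + card Dis = m"
proof -
  have "Hon \<union> Dis = Pr" "Hon \<inter> Dis = {}" unfolding Hon_def Dis_def by auto
  then show ?thesis using card_Un_disjoint[OF finite_Hon finite_Dis] card_Pr by simp
qed

lemma card_Dis_le: "card Dis \<le> t"
  using dishonest_le unfolding Dis_def Pr_def .

lemma card_Hon_ge: "2 * t + 1 \<le> card Hon"
  using card_Hon_Dis card_Dis_le m_ge by linarith

lemma k_le_card_Hon: "k \<le> card Hon - t"
  using card_Hon_ge unfolding k_def kpar_def by linarith

lemma card_filter_Pr_le: "card {j \<in> Pr. Q j} \<le> card {j \<in> Hon. Q j} + card Dis"
proof -
  have "{j \<in> Pr. Q j} \<subseteq> {j \<in> Hon. Q j} \<union> Dis" unfolding Hon_def Dis_def by auto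
  then have "card {j \<in> Pr. Q j} \<le> card ({j \<in> Hon. Q j} \<union> Dis)"
    using finite_Hon finite_Dis by (intro card_mono) auto
  also have "\<dots> \<le> card {j \<in> Hon. Q j} + card Dis" by (rule card_Un_le)
  finally show ?thesis .
qed

lemma card_Hon_filter_ge: "m - t \<le> card {j \<in> Pr. Q j} \<Longrightarrow> card Hon - t \<le> card {j \<in> Hon. Q j}"
  using card_filter_Pr_le[of Q] card_Hon_Dis by linarith

lemma card_Hon_le_filter_Pr:
  assumes "\<And>p. p \<in> Hon \<Longrightarrow> Q p"
  shows "card Hon \<le> card {p \<in> Pr. Q p}"
  using finite_Pr Hon_Pr assms by (intro card_mono) auto

lemma card_filter_Pr_ge:
  assumes "\<And>p. p \<in> Hon \<Longrightarrow> Q p"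
  shows "m - t \<le> card {p \<in> Pr. Q p}"
  using card_Hon_le_filter_Pr[of Q, OF assms] card_Hon_Dis card_Dis_le by linarith

lemma agrees_eq_if_w0_eq: "w0 i = w0 j \<Longrightarrow> agrees i p = agrees j p"
  unfolding agrees_def y_def by simp

lemma agrees_if_w0_eq: "w0 p = w0 i \<Longrightarrow> agrees i p"
  unfolding agrees_def y_def by simp

lemma u1_honest_iff: "j \<in> H \<Longrightarrow> u1 i j \<longleftrightarrow> agrees i j \<and> agrees j i"
  unfolding u1_def pair1_def agrees_def by auto

lemma s2_imp_s1: "s2 i \<Longrightarrow> s1 i"
  unfolding s2_def by auto

lemma s3_imp_s2: "s3 i \<Longrightarrow> s2 i"
  unfolding s3_def by auto

lemma rec1_honest: "j \<in> H \<Longrightarrow> rec1 i j = s1 j"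
  unfolding rec1_def by auto

lemma rec2_honest: "j \<in> H \<Longrightarrow> rec2 i j = s2 j"
  unfolding rec2_def note2_def using rec1_honest s2_imp_s1 by auto

lemma rec3_honest: "j \<in> H \<Longrightarrow> rec3 i j = s3 j"
  unfolding rec3_def note3_def using rec2_honest s3_imp_s2 by auto

lemma s1_support: "s1 i \<Longrightarrow> card Hon - t \<le> card {j \<in> Hon. u1 i j}"
  unfolding s1_def by (rule card_Hon_filter_ge)

lemma s2_support: "s2 i \<Longrightarrow> card Hon - t \<le> card {j \<in> Hon. u1 i j \<and> s1 j}"
proof -
  assume "s2 i"
  then have "card Hon - t \<le> card {j \<in> Hon. u2 i j}"
    unfolding s2_def by (intro card_Hon_filter_ge) auto
  also have "{j \<in> Hon. u2 i j} = {j \<in> Hon. u1 i j \<and> s1 j}"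
    unfolding u2_def using rec1_honest Hon_honest by auto
  finally show ?thesis .
qed

lemma s3_support: "s3 i \<Longrightarrow> card Hon - t \<le> card {j \<in> Hon. u1 i j \<and> s2 j}"
proof -
  assume "s3 i"
  then have "card Hon - t \<le> card {j \<in> Hon. u3 i j}"
    unfolding s3_def by (intro card_Hon_filter_ge) auto
  also have "{j \<in> Hon. u3 i j} = {j \<in> Hon. u1 i j \<and> s2 j}"
    unfolding u3_def u2_def using rec1_honest rec2_honest s2_imp_s1 Hon_honest by auto
  finally show ?thesis .
qed

lemma w0_eq_if_codewords_agree:
  assumes "i \<in> H" "j \<in> H" "P \<subseteq> Pr" "k \<le> card P" "\<And>p. p \<in> P \<Longrightarrow> y i p = y j p"
  shows "w0 i = w0 j"
  using messages_eq_if_codewords_agree[OF gf_valid l_pos w0_length w0_length, of i j P m t] assms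
  unfolding y_def c_def k_def Pr_def by auto

lemma card_Agree_Int_le:
  assumes "i \<in> H" "j \<in> H" "w0 i \<noteq> w0 j"
  shows "card (Agree i \<inter> Agree j) \<le> t div 5"
proof (rule ccontr)
  assume "\<not> ?thesis"
  then have "k \<le> card (Agree i \<inter> Agree j)" unfolding k_def kpar_def by simp
  moreover have "Agree i \<inter> Agree j \<subseteq> Pr" unfolding Agree_def Hon_def by auto
  moreover have "y i p = y j p" if "p \<in> Agree i \<inter> Agree j" for p
    using that unfolding Agree_def agrees_def by auto
  ultimately have "w0 i = w0 j" using w0_eq_if_codewords_agree[OF assms(1,2)] by blast
  then show False using assms(3) by contradiction
qed

lemma u1_subset_Agree: "i \<in> H \<Longrightarrow> {j \<in> Hon. u1 i j} \<subseteq> Agree i"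
  unfolding Agree_def using u1_honest_iff Hon_honest by auto

lemma card_Agree_ge:
  assumes "i \<in> H" "s1 i"
  shows "card Hon - t \<le> card (Agree i)"
proof -
  have "card {j \<in> Hon. u1 i j} \<le> card (Agree i)"
    using u1_subset_Agree[OF assms(1)] finite_Hon unfolding Agree_def by (intro card_mono) auto
  then show ?thesis using s1_support[OF assms(2)] by linarith
qed

lemma no_three_s1_messages:
  assumes "a \<in> Hon" "b \<in> Hon" "e \<in> Hon" "s1 a" "s1 b" "s1 e"
    "w0 a \<noteq> w0 b" "w0 a \<noteq> w0 e" "w0 b \<noteq> w0 e"
  shows False
proof -
  have H: "a \<in> H" "b \<in> H" "e \<in> H" using assms Hon_honest by auto
  have fa: "finite (Agree x)" for x unfolding Agree_def using finite_Hon by auto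
  have "card (Agree a \<union> Agree b \<union> Agree e) \<le> card Hon"
    using finite_Hon unfolding Agree_def by (intro card_mono) auto
  moreover have "card (Agree a) + card (Agree b) + card (Agree e) \<le> card (Agree a \<union> Agree b \<union> Agree e)
      + card (Agree a \<inter> Agree b) + card (Agree a \<inter> Agree e) + card (Agree b \<inter> Agree e)"
    by (rule card_sum3_le_Un_Int[OF fa fa fa])
  moreover have "card (Agree a \<inter> Agree b) \<le> t div 5" "card (Agree a \<inter> Agree e) \<le> t div 5"
      "card (Agree b \<inter> Agree e) \<le> t div 5"
    using card_Agree_Int_le H assms by auto
  moreover have "card Hon - t \<le> card (Agree a)" "card Hon - t \<le> card (Agree b)"
      "card Hon - t \<le> card (Agree e)"
    using card_Agree_ge H assms by auto
  moreover have "5 * (t div 5) \<le> t" by simp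
  ultimately show False using card_Hon_ge by linarith
qed

lemma exists_s2_same_w0_not_Agree:
  assumes i: "i \<in> Hon" "s3 i" and i': "i' \<in> Hon" "w0 i \<noteq> w0 i'"
    and two: "\<And>j. j \<in> Hon \<Longrightarrow> s1 j \<Longrightarrow> w0 j = w0 i \<or> w0 j = w0 i'"
  shows "\<exists>j\<in>Hon. w0 j = w0 i \<and> s2 j \<and> j \<notin> Agree i'"
proof (rule ccontr)
  assume none: "\<not> ?thesis"
  have "{j \<in> Hon. u1 i j \<and> s2 j} \<subseteq> Agree i \<inter> Agree i'"
  proof
    fix j assume j: "j \<in> {j \<in> Hon. u1 i j \<and> s2 j}"
    have "j \<in> Agree i" using j u1_subset_Agree[of i] i(1) Hon_honest by auto
    moreover have "j \<in> Agree i'"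
    proof (cases "w0 j = w0 i")
      case False
      then have "w0 j = w0 i'" using two j s2_imp_s1 by blast
      then show ?thesis using j agrees_if_w0_eq unfolding Agree_def by auto
    qed (use none j in auto)
    ultimately show "j \<in> Agree i \<inter> Agree i'" by blast
  qed
  then have "card {j \<in> Hon. u1 i j \<and> s2 j} \<le> card (Agree i \<inter> Agree i')"
    using finite_Hon unfolding Agree_def by (intro card_mono) auto
  also have "\<dots> \<le> t div 5" using card_Agree_Int_le i(1) i' Hon_honest by blast
  finally have "card {j \<in> Hon. u1 i j \<and> s2 j} \<le> t div 5" .
  moreover have "card Hon - t \<le> card {j \<in> Hon. u1 i j \<and> s2 j}" using s3_support[OF i(2)] .
  ultimately show False using card_Hon_ge by linarith
qed

lemma card_same_w0_ge:
  assumes i: "i \<in> Hon" "s3 i" and i': "i' \<in> Hon" "w0 i \<noteq> w0 i'"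
    and two: "\<And>j. j \<in> Hon \<Longrightarrow> s1 j \<Longrightarrow> w0 j = w0 i \<or> w0 j = w0 i'"
  shows "card Hon - t \<le> card {j \<in> Hon. w0 j = w0 i}"
proof -
  obtain j where j: "j \<in> Hon" "w0 j = w0 i" "s2 j" "j \<notin> Agree i'"
    using exists_s2_same_w0_not_Agree[OF assms] by blast
  have "{p \<in> Hon. u1 j p \<and> s1 p} \<subseteq> {p \<in> Hon. w0 p = w0 i}"
  proof
    fix p assume p: "p \<in> {p \<in> Hon. u1 j p \<and> s1 p}"
    have "w0 p \<noteq> w0 i'"
    proof
      assume "w0 p = w0 i'"
      moreover have "agrees p j" using p u1_honest_iff Hon_honest by auto
      ultimately have "agrees i' j" using agrees_eq_if_w0_eq[of p i' j] by simp
      then show False using j(1,4) unfolding Agree_def by simp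
    qed
    then show "p \<in> {p \<in> Hon. w0 p = w0 i}" using two p by auto
  qed
  then have "card {p \<in> Hon. u1 j p \<and> s1 p} \<le> card {p \<in> Hon. w0 p = w0 i}"
    using finite_Hon by (intro card_mono) auto
  then show ?thesis using s2_support[OF j(3)] by linarith
qed

lemma s3_w0_eq:
  assumes "i \<in> Hon" "s3 i" "i' \<in> Hon" "s3 i'"
  shows "w0 i = w0 i'"
proof (rule ccontr)
  assume ne: "w0 i \<noteq> w0 i'"
  have s1: "s1 i" "s1 i'" using assms s3_imp_s2 s2_imp_s1 by auto
  have two: "w0 j = w0 i \<or> w0 j = w0 i'" if "j \<in> Hon" "s1 j" for j
  proof (rule ccontr)
    assume "\<not> (w0 j = w0 i \<or> w0 j = w0 i')"
    then show False using no_three_s1_messages[OF assms(1) assms(3) that(1) s1 that(2) ne] by auto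
  qed
  have two': "w0 j = w0 i' \<or> w0 j = w0 i" if "j \<in> Hon" "s1 j" for j
    using two[OF that] by auto
  have A: "card Hon - t \<le> card {j \<in> Hon. w0 j = w0 i}"
    using card_same_w0_ge[OF assms(1,2,3) ne two] .
  have B: "card Hon - t \<le> card {j \<in> Hon. w0 j = w0 i'}"
    using card_same_w0_ge[OF assms(3,4,1) ne[symmetric] two'] .
  have "card ({j \<in> Hon. w0 j = w0 i} \<union> {j \<in> Hon. w0 j = w0 i'})
      = card {j \<in> Hon. w0 j = w0 i} + card {j \<in> Hon. w0 j = w0 i'}"
    using ne finite_Hon by (intro card_Un_disjoint) auto
  moreover have "card ({j \<in> Hon. w0 j = w0 i} \<union> {j \<in> Hon. w0 j = w0 i'}) \<le> card Hon"
    using finite_Hon by (intro card_mono) auto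
  ultimately show False using A B card_Hon_ge by linarith
qed

lemma code_params: "1 \<le> c" "l \<le> k * c" "m + 1 \<le> 2 ^ c"
  using cpar_bounds[OF l_pos, where m = m and t = t] unfolding c_def k_def by auto

lemma k_le_points: "k \<le> 2 ^ c - 1"
proof -
  have "k \<le> m" unfolding k_def kpar_def using m_ge by simp
  then show ?thesis using code_params by linarith
qed

lemma Pr_points: "j \<in> Pr \<Longrightarrow> j \<in> {1..2 ^ c - 1}"
  using code_params unfolding Pr_def by auto

lemma y_closed: "i \<in> H \<Longrightarrow> j \<in> Pr \<Longrightarrow> y i j \<in> carrier R"
  unfolding y_def R_def
  by (rule evalc_closed[OF gf_valid code_params(1) k_le_points Pr_points])
    (use encm_closed[OF gf_valid code_params(1)] w0_length code_params(2) in auto)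

lemma unique_decoding:
  assumes "length x = l" "length w = l" "m - t \<le> card {p \<in> Pr. E p}"
    and "\<And>p. p \<in> Hon \<Longrightarrow> E p \<Longrightarrow> evalc G c k p (encm G c k x) = evalc G c k p (encm G c k w)"
  shows "x = w"
proof (rule messages_eq_if_codewords_agree[OF gf_valid l_pos assms(1,2),
      where P = "{p \<in> Hon. E p}"])
  show "{p \<in> Hon. E p} \<subseteq> {1..m}" unfolding Hon_def Pr_def by auto
  show "kpar t \<le> card {p \<in> Hon. E p}"
    using card_Hon_filter_ge[OF assms(3)] k_le_card_Hon unfolding k_def by linarith
qed (use assms(4) in \<open>simp add: c_def k_def\<close>)

context
  fixes i1 assumes i1: "i1 \<in> Hon" "s3 i1" and many_s3: "t + 1 \<le> card {j \<in> Hon. s3 j}"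
begin

lemma w0_eq_if_s3: "j \<in> Hon \<Longrightarrow> s3 j \<Longrightarrow> w0 j = w0 i1"
  using s3_w0_eq i1 by blast

text \<open>Only the at most t dishonest members of S1 i can report a wrong symbol for i, while
  the at least t + 1 honest ones report the right one.\<close>

lemma maj_eq_y:
  assumes i: "i \<in> Hon"
  shows "maj i = y i1 i"
proof -
  let ?cnt = "\<lambda>v. card {j \<in> S1 i. fst (pair1 i j) = v}"
  have honest_S1: "fst (pair1 i j) = y i1 i" if "j \<in> S1 i" "j \<in> H" for j
  proof -
    have "j \<in> Hon" "s3 j" using that rec3_honest unfolding S1_def Hon_def by auto
    then have "w0 j = w0 i1" by (rule w0_eq_if_s3)
    then show ?thesis unfolding pair1_def using that(2) by (simp add: y_def)
  qed
  have "{j \<in> Hon. s3 j} \<subseteq> {j \<in> S1 i. fst (pair1 i j) = y i1 i}"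
  proof
    fix j assume j: "j \<in> {j \<in> Hon. s3 j}"
    then have "j \<in> S1 i" unfolding S1_def using rec3_honest Hon_honest Hon_Pr by auto
    then show "j \<in> {j \<in> S1 i. fst (pair1 i j) = y i1 i}" using honest_S1 j Hon_honest by auto
  qed
  then have "card {j \<in> Hon. s3 j} \<le> ?cnt (y i1 i)"
    using finite_Pr unfolding S1_def by (intro card_mono) auto
  then have "t < ?cnt (y i1 i)" using many_s3 by linarith
  moreover have "?cnt v \<le> t" if "v \<noteq> y i1 i" for v
  proof -
    have "{j \<in> S1 i. fst (pair1 i j) = v} \<subseteq> Dis"
    proof
      fix j assume j: "j \<in> {j \<in> S1 i. fst (pair1 i j) = v}"
      then have "j \<notin> H" using honest_S1 that by auto
      then show "j \<in> Dis" using j unfolding S1_def Dis_def by auto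
    qed
    then show ?thesis using card_mono[OF finite_Dis] card_Dis_le by (meson le_trans)
  qed
  moreover have "y i1 i \<in> carrier R" using y_closed Hon_honest Hon_Pr i1 i by auto
  ultimately show ?thesis unfolding maj_def by (rule some_max_count_eq[where cnt = ?cnt])
qed

lemma z_eq_y:
  assumes i: "i \<in> Hon" "\<not> s3 i" and j: "j \<in> Hon"
  shows "z i j = y i1 j"
proof -
  have jH: "j \<in> H" using j Hon_honest by auto
  consider "j = i" | "j \<noteq> i" "s3 j" | "j \<noteq> i" "\<not> s3 j" by blast
  then show ?thesis
  proof cases
    case 1
    then show ?thesis unfolding z_def using maj_eq_y i by simp
  next
    case 2
    then have "j \<notin> S0 i" unfolding S0_def using rec3_honest jH by auto
    then have "z i j = y j j" unfolding z_def pair1_def using 2 jH by simp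
    moreover have "w0 j = w0 i1" using j 2(2) by (rule w0_eq_if_s3)
    ultimately show ?thesis by (simp add: y_def)
  next
    case 3
    then have "j \<in> S0 i" "i \<in> S0 j"
      unfolding S0_def using rec3_honest Hon_honest Hon_Pr i j by auto
    then have "z i j = maj j" unfolding z_def ph4_def using 3 jH by simp
    then show ?thesis using maj_eq_y j by simp
  qed
qed

lemma decode_eq_w0:
  assumes i: "i \<in> Hon" "\<not> s3 i"
  shows "decode i = Some (w0 i1)"
proof -
  have w: "w0 i1 \<in> Msgs" using w0_length i1 Hon_honest unfolding Msgs_def by simp
  have z: "z i p = evalc G c k p (encm G c k (w0 i1))" if "p \<in> Hon" for p
    using z_eq_y[OF i that] unfolding y_def .
  have cons: "consistent i (w0 i1)" unfolding consistent_def using z by (intro card_filter_Pr_ge) simp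
  have uniq: "x = w0 i1" if x: "x \<in> Msgs" "consistent i x" for x
  proof (rule unique_decoding[where E = "\<lambda>p. evalc G c k p (encm G c k x) = z i p"])
    show "length x = l" "length (w0 i1) = l" using x(1) w unfolding Msgs_def by auto
    show "m - t \<le> card {p \<in> Pr. evalc G c k p (encm G c k x) = z i p}"
      using x(2) unfolding consistent_def .
  qed (use z in simp)
  have "(SOME x. x \<in> Msgs \<and> consistent i x) = w0 i1" using w cons uniq by (blast intro: some_equality)
  then show ?thesis unfolding decode_def using w cons by auto
qed

end

lemma many_s3_if_decision:
  assumes decision
  shows "t + 1 \<le> card {j \<in> Hon. s3 j}"
proof -
  have "Hon \<noteq> {}" using card_Hon_ge by auto
  then obtain i0 where i0: "i0 \<in> Hon" "vote i0"
    using assms unfolding decision_def Hon_def by (metis (full_types) IntI Int_emptyI)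
  have "2 * t + 1 \<le> card {j \<in> Pr. rec3 i0 j}" using i0 unfolding vote_def by simp
  also have "\<dots> \<le> card {j \<in> Hon. rec3 i0 j} + card Dis" by (rule card_filter_Pr_le)
  also have "{j \<in> Hon. rec3 i0 j} = {j \<in> Hon. s3 j}" using rec3_honest Hon_honest by auto
  finally show ?thesis using card_Dis_le by linarith
qed

lemma core_out_agree:
  "(\<forall>i\<in>Hon. out i = None) \<or> (\<exists>w. length w = l \<and> (\<forall>i\<in>Hon. out i = Some w))"
proof (cases decision)
  case False
  then show ?thesis unfolding out_def by simp
next
  case True
  then have many: "t + 1 \<le> card {j \<in> Hon. s3 j}" by (rule many_s3_if_decision)
  then have "0 < card {j \<in> Hon. s3 j}" by linarith
  then have "{j \<in> Hon. s3 j} \<noteq> {}" unfolding card_gt_0_iff by blast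
  then obtain i1 where i1: "i1 \<in> Hon" "s3 i1" by blast
  have "out i = Some (w0 i1)" if i: "i \<in> Hon" for i
  proof (cases "s3 i")
    case True
    then show ?thesis unfolding out_def using \<open>decision\<close> s3_w0_eq[OF i True i1] by simp
  next
    case False
    then show ?thesis unfolding out_def using \<open>decision\<close> decode_eq_w0[OF i1 many i False] by simp
  qed
  then show ?thesis using w0_length i1 Hon_honest by blast
qed

lemma all_s3_if_same_w0:
  assumes same: "\<And>i. i \<in> Hon \<Longrightarrow> w0 i = M" and i: "i \<in> Hon"
  shows "s3 i"
proof -
  have u1: "u1 i j" if "i \<in> Hon" "j \<in> Hon" for i j
  proof -
    have "agrees i j" "agrees j i" using that same agrees_if_w0_eq by auto
    then show ?thesis using u1_honest_iff[of j i] Hon_honest[OF that(2)] by simp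
  qed
  have s1: "s1 i" if "i \<in> Hon" for i
    unfolding s1_def using u1 that by (intro card_filter_Pr_ge)
  have s2: "s2 i" if "i \<in> Hon" for i
    unfolding s2_def u2_def using s1 u1 that rec1_honest Hon_honest by (auto intro!: card_filter_Pr_ge)
  show "s3 i"
    unfolding s3_def u3_def u2_def using s1 s2 u1 i rec1_honest rec2_honest Hon_honest
    by (auto intro!: card_filter_Pr_ge)
qed

lemma core_out_valid:
  assumes same: "\<And>i. i \<in> Hon \<Longrightarrow> w0 i = M"
  shows "\<forall>i\<in>Hon. out i = Some M"
proof -
  have "vote i" if "i \<in> Hon" for i
  proof -
    have "card Hon \<le> card {j \<in> Pr. rec3 i j}"
      using all_s3_if_same_w0[OF same] rec3_honest Hon_honest by (intro card_Hon_le_filter_Pr) auto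
    then show ?thesis unfolding vote_def using card_Hon_ge by linarith
  qed
  then have decision unfolding decision_def Hon_def by auto
  then show ?thesis unfolding out_def using all_s3_if_same_w0[OF same] same by auto
qed

text \<open>Decoding step of a processor outside the core when n > C t: r p is the value reported
  by p \<in> {1..m}, faithfully so for honest p.\<close>

lemma outer_decode_eq_out:
  assumes r: "\<And>p. p \<in> Hon \<Longrightarrow> r p = map_option (\<lambda>x. evalc G c k p (encm G c k x)) (out p)"
    and i0: "i0 \<in> Hon"
  shows "(if \<exists>x. length x = l \<and> m - t \<le> card {p \<in> {1..m}. r p = Some (evalc G c k p (encm G c k x))}
          then Some (SOME x. length x = l \<and> m - t \<le> card {p \<in> {1..m}. r p = Some (evalc G c k p (encm G c k x))})
          else None) = out i0"
proof -
  define ok where "ok x \<longleftrightarrow> m - t \<le> card {p \<in> Pr. r p = Some (evalc G c k p (encm G c k x))}" for x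
  have "{1..m} = Pr" unfolding Pr_def ..
  then have lhs: "(if \<exists>x. length x = l \<and> m - t \<le> card {p \<in> {1..m}. r p = Some (evalc G c k p (encm G c k x))}
          then Some (SOME x. length x = l \<and> m - t \<le> card {p \<in> {1..m}. r p = Some (evalc G c k p (encm G c k x))})
          else None) = (if \<exists>x. length x = l \<and> ok x then Some (SOME x. length x = l \<and> ok x) else None)"
    unfolding ok_def by simp
  from core_out_agree consider (none) "\<forall>i\<in>Hon. out i = None"
    | (some) w where "length w = l" "\<forall>i\<in>Hon. out i = Some w"
    by blast
  then show ?thesis
  proof cases
    case none
    have "\<not> ok x" for x
    proof
      have "{p \<in> Pr. r p = Some (evalc G c k p (encm G c k x))} \<subseteq> Dis"
        using r none unfolding Dis_def Hon_def by auto
      then have "card {p \<in> Pr. r p = Some (evalc G c k p (encm G c k x))} \<le> t"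
        using card_mono[OF finite_Dis] card_Dis_le le_trans by blast
      moreover assume "ok x"
      ultimately show False using m_ge unfolding ok_def by linarith
    qed
    then show ?thesis unfolding lhs using none i0 by auto
  next
    case some
    have r_some: "r p = Some (evalc G c k p (encm G c k w))" if "p \<in> Hon" for p
      using r[OF that] some(2) that by simp
    have ok: "ok w" unfolding ok_def using r_some by (intro card_filter_Pr_ge) simp
    have uniq: "x = w" if x: "length x = l" "ok x" for x
    proof (rule unique_decoding[where E = "\<lambda>p. r p = Some (evalc G c k p (encm G c k x))"])
      show "m - t \<le> card {p \<in> Pr. r p = Some (evalc G c k p (encm G c k x))}"
        using x(2) unfolding ok_def .
    qed (use x some(1) r_some in simp_all)
    have "(SOME x. length x = l \<and> ok x) = w" using ok uniq some(1) by (blast intro: some_equality)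
    then show ?thesis unfolding lhs using ok some i0 by auto
  qed
qed

end

section \<open>Correctness of adapted COOL\<close>

lemma length_init_msg: "length M = l \<Longrightarrow> length (init_msg l L M B A i) = l"
  unfolding init_msg_def by auto

lemma core_size_bounds:
  assumes "3 * t + 1 \<le> n"
  shows "core_size C n t \<le> n" "3 * t + 1 \<le> core_size C n t"
    "\<not> small_case C n t \<Longrightarrow> core_size C n t = 3 * t + 1"
  using assms unfolding core_size_def by auto

lemma cool_setting_core:
  assumes "valid_gf G" "1 \<le> l" "3 * t + 1 \<le> n" "length M = l" "B \<subseteq> {1..n}" "card B \<le> t"
  shows "cool_setting G (core_size C n t) t l (honest n B) (init_msg l L M B A)"
proof unfold_locales
  have "{1..core_size C n t} - honest n B \<subseteq> B"
    using core_size_bounds(1)[OF assms(3), of C] unfolding honest_def by auto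
  moreover have "finite B" using assms(5) by (rule finite_subset) simp
  ultimately show "card ({1..core_size C n t} - honest n B) \<le> t"
    using card_mono assms(6) le_trans by blast
  show "3 * t + 1 \<le> core_size C n t" using core_size_bounds(2)[OF assms(3)] .
  show "length (init_msg l L M B A i) = l" for i using length_init_msg[OF assms(4)] .
qed (use assms in simp_all)

lemma cool_out_eq_core_out:
  assumes setting: "valid_gf G" "1 \<le> l" "3 * t + 1 \<le> n" "length M = l" "B \<subseteq> {1..n}" "card B \<le> t"
    and i: "i \<in> honest n B" and i0: "i0 \<in> honest n B \<inter> {1..core_size C n t}"
  shows "cool_out G C n t l L M B A i
    = cool_core.out G (core_size C n t) t l (honest n B) (init_msg l L M B A) A i0"
proof -
  define m where "m = core_size C n t"
  interpret cool_setting G m t l "honest n B" "init_msg l L M B A" A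
    unfolding m_def by (rule cool_setting_core[OF setting])
  have i0_Hon: "i0 \<in> Hon" using i0 unfolding Hon_def Pr_def by (simp add: m_def)
  show ?thesis
  proof (cases "i \<le> m")
    case True
    then have "i \<in> Hon" using i unfolding Hon_def Pr_def by (auto simp: honest_def)
    then have "out i = out i0" using core_out_agree i0_Hon by auto
    then show ?thesis unfolding cool_out_def Let_def m_def[symmetric] using True by simp
  next
    case False
    then have "\<not> small_case C n t" using i unfolding m_def core_size_def honest_def by auto
    then have m: "3 * t + 1 = m" using core_size_bounds(3)[OF setting(3)] unfolding m_def by simp
    define r where "r p = (if p \<in> honest n B then map_option (\<lambda>x. evalc G c k p (encm G c k x)) (out p)
               else map_option (sanit (gf G c)) (fin_val A p i))" for p
    have "r p = map_option (\<lambda>x. evalc G c k p (encm G c k x)) (out p)" if "p \<in> Hon" for p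
      using that unfolding r_def Hon_def by auto
    from outer_decode_eq_out[OF this i0_Hon] show ?thesis
      unfolding cool_out_def Let_def m_def[symmetric] m c_def k_def r_def using False by simp
  qed
qed

theorem cool_out_correct:
  assumes "valid_gf G" "1 \<le> l" "3 * t + 1 \<le> n" "length M = l" "B \<subseteq> {1..n}" "card B \<le> t"
  shows "(\<forall>i \<in> honest n B. cool_out G C n t l L M B A i = None) \<or>
         (\<exists>w. length w = l \<and> (\<forall>i \<in> honest n B. cool_out G C n t l L M B A i = Some w))"
    and "L \<notin> B \<Longrightarrow> \<forall>i \<in> honest n B. cool_out G C n t l L M B A i = Some M"
proof -
  interpret cool_setting G "core_size C n t" t l "honest n B" "init_msg l L M B A" A
    by (rule cool_setting_core[OF assms])
  have "Hon \<noteq> {}" using card_Hon_ge by auto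
  then obtain i0 where i0: "i0 \<in> Hon" by blast
  then have "i0 \<in> honest n B \<inter> {1..core_size C n t}" unfolding Hon_def Pr_def .
  then have eq: "cool_out G C n t l L M B A i = out i0" if "i \<in> honest n B" for i
    using cool_out_eq_core_out[OF assms that] by simp
  show "(\<forall>i \<in> honest n B. cool_out G C n t l L M B A i = None) \<or>
         (\<exists>w. length w = l \<and> (\<forall>i \<in> honest n B. cool_out G C n t l L M B A i = Some w))"
    using core_out_agree i0 eq by auto
  assume "L \<notin> B"
  then have "\<forall>i\<in>Hon. out i = Some M" by (intro core_out_valid) (simp add: init_msg_def)
  then show "\<forall>i \<in> honest n B. cool_out G C n t l L M B A i = Some M" using i0 eq by auto
qed

section \<open>Rounds and communicated bits\<close>

context cool_core
begin

lemma bits_le: "bits \<le> m * (3 * (c * m) + 3 * m)"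
proof -
  have per_processor: "2 * c * (m - 1) + (m - 1)
          + (if s1 i \<and> \<not> s2 i then m - 1 else 0)
          + (if s2 i \<and> \<not> s3 i then m - 1 else 0)
          + (if decision \<and> \<not> s3 i then c * card (S0 i - {i}) else 0) \<le> 3 * (c * m) + 3 * m" for i
  proof -
    have "card (S0 i - {i}) \<le> m"
      using card_mono[of Pr "S0 i - {i}"] unfolding S0_def Pr_def by fastforce
    then have "(if decision \<and> \<not> s3 i then c * card (S0 i - {i}) else 0) \<le> c * m" by simp
    moreover have "2 * c * (m - 1) \<le> 2 * (c * m)" by (simp add: diff_mult_distrib2)
    moreover have "(if s1 i \<and> \<not> s2 i then m - 1 else 0) \<le> m" "(if s2 i \<and> \<not> s3 i then m - 1 else 0) \<le> m"
      by auto
    ultimately show ?thesis by linarith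
  qed
  have "bits \<le> card (H \<inter> Pr) * (3 * (c * m) + 3 * m)"
    unfolding bits_def using sum_bounded_above[OF per_processor] by simp
  also have "card (H \<inter> Pr) \<le> m" using card_mono[of Pr "H \<inter> Pr"] unfolding Pr_def by auto
  then have "card (H \<inter> Pr) * (3 * (c * m) + 3 * m) \<le> m * (3 * (c * m) + 3 * m)" by simp
  finally show ?thesis .
qed

lemma rounds_le: "rounds \<le> 5" unfolding rounds_def by auto

end

lemma cpar_le:
  assumes "1 \<le> l"
  shows "real (cpar m t l) \<le> 5 * max (real l) ((real t / 5 + 1) * log 2 (real m + 1)) / (real t + 1) + 1"
proof -
  define X where "X = max (real l) ((real t / 5 + 1) * log 2 (real m + 1))"
  have X: "0 \<le> X" unfolding X_def by simp
  have "t \<le> 5 * (t div 5) + 4" by presburger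
  then have "real t \<le> real (5 * (t div 5) + 4)" by (simp only: of_nat_le_iff)
  then have k: "(real t + 1) / 5 \<le> real (kpar t)" unfolding kpar_def by simp
  have "real (cpar m t l) = of_int \<lceil>X / real (kpar t)\<rceil>"
    unfolding cpar_def X_def[symmetric] using X by (simp add: kpar_def)
  also have "\<dots> \<le> X / real (kpar t) + 1" by (rule of_int_ceiling_le_add_one)
  also have "X / real (kpar t) \<le> X / ((real t + 1) / 5)"
    using k X by (intro divide_left_mono) auto
  finally show ?thesis unfolding X_def by (simp add: ac_simps)
qed

lemma core_size_le:
  assumes "3 * t + 1 \<le> n"
  shows "real (core_size C n t) \<le> max C 4 * (real t + 1)"
proof (cases "small_case C n t")
  case True
  then have "real n \<le> C * real t" unfolding small_case_def by simp
  also have "\<dots> \<le> max C 4 * (real t + 1)" by (intro mult_mono) auto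
  finally show ?thesis using True unfolding core_size_def by simp
next
  case False
  have "3 * real t + 1 \<le> 4 * (real t + 1)" by simp
  also have "\<dots> \<le> max C 4 * (real t + 1)" by (intro mult_right_mono) auto
  finally show ?thesis using False unfolding core_size_def by simp
qed

lemma scaled_log_le:
  fixes C' :: real
  assumes C': "4 \<le> C'" and m: "real m \<le> C' * (real t + 1)"
  defines "A0 \<equiv> log 2 (2 * (C' + 1))"
  shows "(real t / 5 + 1) * log 2 (real m + 1) \<le> (A0 + 1) * (real t * log 2 (real t)) + 2 * A0"
proof -
  have A0: "0 \<le> A0" unfolding A0_def using C' by simp
  show ?thesis
  proof (cases "t = 0")
  case True
  then have "real m + 1 \<le> 2 * (C' + 1)" using m C' by simp
  then have "log 2 (real m + 1) \<le> A0" unfolding A0_def by simp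
  then show ?thesis using True A0 by simp
next
  case False
  then have t1: "1 \<le> real t" by simp
  have "C' * 1 \<le> C' * real t" using t1 C' by (intro mult_left_mono) auto
  then have "real m + 1 \<le> 2 * (C' + 1) * real t"
    using m t1 by (simp add: algebra_simps)
  then have "log 2 (real m + 1) \<le> log 2 (2 * (C' + 1) * real t)" by simp
  also have "\<dots> = A0 + log 2 (real t)" unfolding A0_def using t1 C' by (simp add: log_mult)
  finally have lm: "log 2 (real m + 1) \<le> A0 + log 2 (real t)" .
  show ?thesis
  proof (cases "t = 1")
    case True
    then show ?thesis using lm A0 by simp
  next
    case False
    then have t2: "2 \<le> real t" using t1 \<open>t \<noteq> 0\<close> by simp
    then have "1 \<le> log 2 (real t)" by simp
    then have "log 2 (real m + 1) \<le> (A0 + 1) * log 2 (real t)"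
      using lm mult_left_mono[of 1 "log 2 (real t)" A0] A0 by (simp add: algebra_simps)
    moreover have "real t / 5 + 1 \<le> real t" using t2 by simp
    ultimately have "(real t / 5 + 1) * log 2 (real m + 1) \<le> real t * ((A0 + 1) * log 2 (real t))"
      by (intro mult_mono) auto
    then show ?thesis using A0 by (simp add: algebra_simps)
  qed
qed
qed

lemma cpar_mult_core_size_le:
  fixes C :: real
  assumes "1 \<le> l" "3 * t + 1 \<le> n"
  defines "m \<equiv> core_size C n t" and "C' \<equiv> max C 4"
  defines "A0 \<equiv> log 2 (2 * (C' + 1))"
  shows "real (cpar m t l) * real m
    \<le> 5 * C' * (real l + (A0 + 1) * (real t * log 2 (real t)) + 2 * A0) + C' * (real t + 1)"
proof -
  define X where "X = max (real l) ((real t / 5 + 1) * log 2 (real m + 1))"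
  have C': "4 \<le> C'" unfolding C'_def by simp
  have mC: "real m \<le> C' * (real t + 1)" using core_size_le[OF assms(2)] unfolding m_def C'_def .
  have X: "0 \<le> X" "X \<le> real l + (A0 + 1) * (real t * log 2 (real t)) + 2 * A0"
  proof -
    have "0 \<le> A0" unfolding A0_def using C' by simp
    moreover have "0 \<le> log 2 (real t)" by (cases "t = 0") (auto simp: log_def)
    ultimately have "0 \<le> (A0 + 1) * (real t * log 2 (real t)) + 2 * A0" by simp
    then show "X \<le> real l + (A0 + 1) * (real t * log 2 (real t)) + 2 * A0"
      using scaled_log_le[OF C' mC] unfolding X_def A0_def by auto
  qed (simp add: X_def)
  have "real m / (real t + 1) \<le> C'" using mC by (simp add: divide_le_eq mult.commute)
  have "real (cpar m t l) * real m \<le> (5 * X / (real t + 1) + 1) * real m"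
    using cpar_le[OF assms(1), of m t] unfolding X_def by (intro mult_right_mono) auto
  also have "\<dots> = 5 * X * (real m / (real t + 1)) + real m" by (simp add: algebra_simps)
  also have "\<dots> \<le> 5 * X * C' + C' * (real t + 1)"
    using X(1) mC \<open>real m / (real t + 1) \<le> C'\<close> by (intro add_mono mult_left_mono) auto
  also have "\<dots> \<le> 5 * C' * (real l + (A0 + 1) * (real t * log 2 (real t)) + 2 * A0) + C' * (real t + 1)"
    using X(2) C' by simp
  finally show ?thesis .
qed

lemma cool_rounds_le:
  assumes "real (ba_rounds (core_size C n t) t) \<le> Kb * real (t + 1)"
  shows "real (cool_rounds ba_rounds G C n t l L M B A) \<le> (7 + \<bar>Kb\<bar>) * real (t + 1)"
proof -
  have "cool_core.rounds G (core_size C n t) t l (honest n B) (init_msg l L M B A) A \<le> 5"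
    by (rule cool_core.rounds_le)
  then have "real (cool_rounds ba_rounds G C n t l L M B A) \<le> 7 + real (ba_rounds (core_size C n t) t)"
    unfolding cool_rounds_def Let_def by simp
  also have "\<dots> \<le> 7 + \<bar>Kb\<bar> * real (t + 1)"
  proof -
    have "Kb * real (t + 1) \<le> \<bar>Kb\<bar> * real (t + 1)" by (intro mult_right_mono) auto
    then show ?thesis using assms by linarith
  qed
  also have "\<dots> \<le> (7 + \<bar>Kb\<bar>) * real (t + 1)" by (simp add: algebra_simps)
  finally show ?thesis .
qed

lemma cool_bits_le_nat:
  fixes C :: real
  assumes "1 \<le> l" "3 * t + 1 \<le> n"
  defines "m \<equiv> core_size C n t"
  shows "cool_bits ba_bits G C n t l L M B A \<le> l * n + 8 * (cpar m t l * m * n) + ba_bits m t"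
proof -
  define c where "c = cpar m t l"
  have c: "1 \<le> c" unfolding c_def using cpar_bounds(1)[OF assms(1)] .
  have mn: "m \<le> n" unfolding m_def using core_size_bounds(1)[OF assms(2)] .
  have mm: "m * m \<le> c * m * n" and cmm: "c * m * m \<le> c * m * n"
    using mult_le_mono[OF c mult_le_mono2[OF mn, of m]] mult_le_mono2[OF mn, of "c * m"] by simp_all
  have "cool_core.bits G m t l (honest n B) (init_msg l L M B A) A \<le> m * (3 * (c * m) + 3 * m)"
    using cool_core.bits_le unfolding cool_core.c_def c_def .
  also have "\<dots> = 3 * (c * m * m) + 3 * (m * m)" by (simp add: algebra_simps)
  finally have core: "cool_core.bits G m t l (honest n B) (init_msg l L M B A) A \<le> 6 * (c * m * n)"
    using mm cmm by linarith
  have "card (honest n B \<inter> {1..m}) * (c + 1) * (n - m) \<le> m * (2 * c) * n"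
    using card_mono[of "{1..m}" "honest n B \<inter> {1..m}"] c by (intro mult_le_mono) auto
  then have outer: "(if small_case C n t then 0 else card (honest n B \<inter> {1..m}) * (c + 1) * (n - m))
      \<le> 2 * (c * m * n)" by (simp add: algebra_simps)
  have "(if L \<notin> B then l * (n - 1) else 0) \<le> l * n" by simp
  then show ?thesis using core outer unfolding cool_bits_def Let_def m_def[symmetric] c_def by linarith
qed

lemma cost_scale_bounds:
  fixes n t l :: nat
  assumes "1 \<le> l"
  defines "Phi \<equiv> max (real n * real l) (real n * real t * log 2 (real t))"
  shows "real n * real l \<le> Phi" "real n \<le> Phi" "real n * (real t * log 2 (real t)) \<le> Phi"
    "real n * (real t + 1) \<le> 2 * Phi"
proof -
  show p1: "real n * real l \<le> Phi" unfolding Phi_def by simp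
  have "real n * 1 \<le> real n * real l" using assms(1) by (intro mult_left_mono) auto
  then show p2: "real n \<le> Phi" using p1 by simp
  show p3: "real n * (real t * log 2 (real t)) \<le> Phi" unfolding Phi_def by (simp add: mult.assoc)
  have "real n * real t \<le> Phi"
  proof (cases "t \<le> 1")
    case True
    then have "real n * real t \<le> real n * 1" by (intro mult_left_mono) auto
    then show ?thesis using p2 by simp
  next
    case False
    then have "1 \<le> log 2 (real t)" by simp
    then have "real n * real t * 1 \<le> real n * real t * log 2 (real t)" by (intro mult_left_mono) auto
    then show ?thesis using p3 by (simp add: mult.assoc)
  qed
  then show "real n * (real t + 1) \<le> 2 * Phi" using p2 by (simp add: algebra_simps)
qed

lemma cool_bits_le:
  fixes C Kb :: real
  assumes l: "1 \<le> l" and n: "3 * t + 1 \<le> n"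
    and ba: "real (ba_bits (core_size C n t) t) \<le> Kb * real (core_size C n t) * real (t + 1)"
  defines "C' \<equiv> max C 4"
  defines "Q \<equiv> 5 * C' * (2 + 3 * log 2 (2 * (C' + 1))) + 2 * C'"
  shows "real (cool_bits ba_bits G C n t l L M B A)
    \<le> (1 + 2 * \<bar>Kb\<bar> + 8 * Q) * max (real n * real l) (real n * real t * log 2 (real t))"
proof -
  define m where "m = core_size C n t"
  define A0 where "A0 = log 2 (2 * (C' + 1))"
  define Phi where "Phi = max (real n * real l) (real n * real t * log 2 (real t))"
  have Phi: "real n * real l \<le> Phi" "real n \<le> Phi" "real n * (real t * log 2 (real t)) \<le> Phi"
    "real n * (real t + 1) \<le> 2 * Phi"
    using cost_scale_bounds[OF l, of n t] unfolding Phi_def by auto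
  have C': "4 \<le> C'" and A0: "0 \<le> A0" unfolding C'_def A0_def by auto
  have mn: "m \<le> n" unfolding m_def using core_size_bounds(1)[OF n] .
  have "real (cpar m t l) * real m * real n
      \<le> (5 * C' * (real l + (A0 + 1) * (real t * log 2 (real t)) + 2 * A0) + C' * (real t + 1)) * real n"
    using cpar_mult_core_size_le[OF l n] unfolding m_def C'_def A0_def by (intro mult_right_mono) auto
  also have "\<dots> = 5 * C' * (real n * real l + (A0 + 1) * (real n * (real t * log 2 (real t)))
      + 2 * A0 * real n) + C' * (real n * (real t + 1))" by (simp add: algebra_simps)
  also have "\<dots> \<le> 5 * C' * (Phi + (A0 + 1) * Phi + 2 * A0 * Phi) + C' * (2 * Phi)"
    using Phi A0 C' by (intro add_mono mult_left_mono) auto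
  also have "\<dots> = Q * Phi" unfolding Q_def A0_def[symmetric] by (simp add: algebra_simps)
  finally have cmn: "real (cpar m t l) * real m * real n \<le> Q * Phi" .
  have "real (ba_bits m t) \<le> \<bar>Kb\<bar> * (real m * real (t + 1))"
  proof -
    have "Kb * (real m * real (t + 1)) \<le> \<bar>Kb\<bar> * (real m * real (t + 1))" by (intro mult_right_mono) auto
    then show ?thesis using ba unfolding m_def mult.assoc by linarith
  qed
  also have "\<dots> \<le> \<bar>Kb\<bar> * (2 * Phi)"
  proof -
    have "real m * real (t + 1) \<le> real n * (real t + 1)" using mn by (intro mult_mono) auto
    then show ?thesis using Phi(4) by (intro mult_left_mono) auto
  qed
  finally have "real (ba_bits m t) \<le> 2 * \<bar>Kb\<bar> * Phi" by simp
  moreover have "real (cool_bits ba_bits G C n t l L M B A)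
      \<le> real n * real l + 8 * (real (cpar m t l) * real m * real n) + real (ba_bits m t)"
  proof -
    have "real (cool_bits ba_bits G C n t l L M B A) \<le> real (l * n + 8 * (cpar m t l * m * n) + ba_bits m t)"
      using cool_bits_le_nat[OF l n, where ba_bits = ba_bits and G = G and L = L and M = M
          and B = B and A = A and C = C]
      unfolding m_def[symmetric] by (simp only: of_nat_le_iff)
    then show ?thesis by (simp add: mult.commute)
  qed
  ultimately have "real (cool_bits ba_bits G C n t l L M B A) \<le> Phi + 8 * (Q * Phi) + 2 * \<bar>Kb\<bar> * Phi"
    using Phi(1) cmn by linarith
  then show ?thesis unfolding Phi_def by (simp add: algebra_simps)
qed

theorem theorem2:
  fixes G :: "'a gf_data" and C :: real
    and ba_bits :: "nat \<Rightarrow> nat \<Rightarrow> nat" and ba_rounds :: "nat \<Rightarrow> nat \<Rightarrow> nat"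
  assumes "valid_gf G"
    and "\<exists>Kb. \<forall>m t. 3 * t + 1 \<le> m \<longrightarrow>
            real (ba_bits m t) \<le> Kb * real m * real (t + 1) \<and> real (ba_rounds m t) \<le> Kb * real (t + 1)"
  shows "\<exists>K. \<forall>n t l L M B (A :: 'a adversary).
     1 \<le> n \<and> 1 \<le> l \<and> 3 * t + 1 \<le> n \<and> L \<in> {1..n} \<and> length M = l \<and> B \<subseteq> {1..n} \<and> card B \<le> t \<longrightarrow>
       (\<forall>i \<in> honest n B. case cool_out G C n t l L M B A i of None \<Rightarrow> True | Some x \<Rightarrow> length x = l)
     \<and> (\<forall>i \<in> honest n B. \<forall>j \<in> honest n B. cool_out G C n t l L M B A i = cool_out G C n t l L M B A j)
     \<and> (L \<notin> B \<longrightarrow> (\<forall>i \<in> honest n B. cool_out G C n t l L M B A i = Some M))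
     \<and> real (cool_rounds ba_rounds G C n t l L M B A) \<le> K * real (t + 1)
     \<and> real (cool_bits ba_bits G C n t l L M B A) \<le> K * max (real n * real l) (real n * real t * log 2 (real t))"
proof -
  obtain Kb where Kb: "\<forall>m t. 3 * t + 1 \<le> m \<longrightarrow>
      real (ba_bits m t) \<le> Kb * real m * real (t + 1) \<and> real (ba_rounds m t) \<le> Kb * real (t + 1)"
    using assms(2) by blast
  define C' where "C' = max C 4"
  define Q where "Q = 5 * C' * (2 + 3 * log 2 (2 * (C' + 1))) + 2 * C'"
  show ?thesis
  proof (intro exI[of _ "max (7 + \<bar>Kb\<bar>) (1 + 2 * \<bar>Kb\<bar> + 8 * Q)"] allI impI conjI)
    fix n t l L :: nat and M :: "bool list" and B :: "nat set" and A :: "'a adversary"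
    assume "1 \<le> n \<and> 1 \<le> l \<and> 3 * t + 1 \<le> n \<and> L \<in> {1..n} \<and> length M = l \<and> B \<subseteq> {1..n} \<and> card B \<le> t"
    then have l: "1 \<le> l" and n: "3 * t + 1 \<le> n" and setting: "length M = l" "B \<subseteq> {1..n}" "card B \<le> t"
      by auto
    note correct = cool_out_correct[OF assms(1) l n setting, where C = C and L = L and A = A]
    show "\<forall>i \<in> honest n B. case cool_out G C n t l L M B A i of None \<Rightarrow> True | Some x \<Rightarrow> length x = l"
      using correct(1) by auto
    show "\<forall>i \<in> honest n B. \<forall>j \<in> honest n B. cool_out G C n t l L M B A i = cool_out G C n t l L M B A j"
      using correct(1) by auto
    show "\<forall>i \<in> honest n B. cool_out G C n t l L M B A i = Some M" if "L \<notin> B"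
      using correct(2) that .
    have ba: "real (ba_bits (core_size C n t) t) \<le> Kb * real (core_size C n t) * real (t + 1)"
      "real (ba_rounds (core_size C n t) t) \<le> Kb * real (t + 1)"
      using Kb core_size_bounds(2)[OF n] by auto
    have "real (cool_rounds ba_rounds G C n t l L M B A) \<le> (7 + \<bar>Kb\<bar>) * real (t + 1)"
      by (rule cool_rounds_le) (rule ba(2))
    also have "\<dots> \<le> max (7 + \<bar>Kb\<bar>) (1 + 2 * \<bar>Kb\<bar> + 8 * Q) * real (t + 1)"
      by (intro mult_right_mono) auto
    finally show "real (cool_rounds ba_rounds G C n t l L M B A)
      \<le> max (7 + \<bar>Kb\<bar>) (1 + 2 * \<bar>Kb\<bar> + 8 * Q) * real (t + 1)" .
    have "real (cool_bits ba_bits G C n t l L M B A)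
      \<le> (1 + 2 * \<bar>Kb\<bar> + 8 * Q) * max (real n * real l) (real n * real t * log 2 (real t))"
      unfolding Q_def C'_def by (rule cool_bits_le[OF l n]) (rule ba(1))
    also have "\<dots> \<le> max (7 + \<bar>Kb\<bar>) (1 + 2 * \<bar>Kb\<bar> + 8 * Q) * max (real n * real l) (real n * real t * log 2 (real t))"
      using cost_scale_bounds(2)[OF l, of n t] by (intro mult_right_mono) auto
    finally show "real (cool_bits ba_bits G C n t l L M B A)
      \<le> max (7 + \<bar>Kb\<bar>) (1 + 2 * \<bar>Kb\<bar> + 8 * Q) * max (real n * real l) (real n * real t * log 2 (real t))" .
  qed
qed

end
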